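(* Let $L\ge2$, $\mathcal L=\llbracket1,L\rrbracket$, let $X_1,\dots,X_L$ be independent binary random variables with distributions $q_{X_l}$, let $q_{Z|X_{\mathcal L}}$ be a memoryless channel with finite output alphabet and $q_Z$ the induced output distribution. Fix $\xi>0$, $\delta^*_{\mathcal L}(N)=\log(2^L+3)\sqrt{\tfrac2N(L+\log N)}$, $\epsilon_2=2(\delta^*_{\mathcal L}(N)+\xi)$, $r_{X_l}=N(H(X_l|ZX_{1:l-1})-\epsilon_2/2)$. For each $l$, a hash function $G_{X_l}:\{0,1\}^N\to\{0,1\}^{r_{X_l}}$ is chosen uniformly at random (independently over $l$) from a two-universal family, and an encoder $e^{X_l}_N$ maps $N(H(X_l)+\epsilon_2/2)$ bits into $\{0,1\}^N$ such that with uniform input its output distribution is within variational distance $\delta(N)$ of $\prod_{i=1}^Nq_{X_l}$. The scheme runs over $k$ blocks: Block 1: $\widetilde X_{l,1}^{1:N}=e^{X_l}_N(E_{l,1})$ with uniform input; Block $i\in\llbracket2,k\rrbracket$: $\widetilde E_{l,i}=G_{X_l}(\widetilde X_{l,i-1}^{1:N})$, $\widetilde X_{l,i}^{1:N}=e^{X_l}_N(\widetilde E_{l,i}\|E_{l,i})$ with $E_{l,i}$ a uniform string of $N(I(X_l;ZX_{1:l-1})+\epsilon_2)$ bits; in each block $\widetilde Z_i^{1:N}$ is the channel output on $(\widetilde X_{l,i}^{1:N})_l$. All fresh randomness, channel noise of distinct blocks and hash choices are mutually independent, and $\widetilde p$ denotes induced distributions (including the random hash choice). Let $\delta^{*(0)}(N)=2/N+2^{L/2}2^{-N\xi/2}$,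 $\delta^*_j(N)=L(\delta(N)+\delta^{*(0)}(N))\frac{L^j-1}{L-1}+L^{j+1}\delta(N)$, and $\delta^{*(2)}_k(N)=(2^{k-1}-1)(4\delta^*_{k-1}(N)+2\delta^{*(0)}(N))$. Then $$\mathbb V\big(\widetilde p_{Z_{1:k}^{1:N}},\,q_{Z^{1:kN}}\big)\le(k-1)\delta^{*(2)}_k(N)+k\,\delta^*_k(N),$$ where $\widetilde p_{Z_{1:k}^{1:N}}$ is the joint distribution of all $k$ blocks of outputs and $q_{Z^{1:kN}}=\prod_{i=1}^{kN}q_Z$.
   Context: $\mathbb V(p,q)=\sum_x|p(x)-q(x)|$, $\log$ base 2, $X_{1:l-1}=(X_1,\dots,X_{l-1})$, $\|$ denotes concatenation; all lengths assumed to be integers. Two-universal hash families are in the sense of Carter–Wegman. *)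

theory Defs
  imports "HOL-Probability.Probability"
begin

fun seq_pmf :: "'a pmf list \<Rightarrow> 'a list pmf" where
  "seq_pmf [] = return_pmf []"
| "seq_pmf (p # ps) = bind_pmf p (\<lambda>x. map_pmf (\<lambda>xs. x # xs) (seq_pmf ps))"

definition iid :: "'a pmf \<Rightarrow> nat \<Rightarrow> 'a list pmf" where
  "iid p n = seq_pmf (replicate n p)"

definition unif_bits :: "nat \<Rightarrow> bool list pmf" where
  "unif_bits n = pmf_of_set {xs. length xs = n}"

text \<open>Variational distance V(p,q) = sum_x |p(x) - q(x)| (no factor 1/2).\<close>
definition vdist :: "'a pmf \<Rightarrow> 'a pmf \<Rightarrow> real" where
  "vdist p q = (\<Sum>\<^sub>\<infinity>x. \<bar>pmf p x - pmf q x\<bar>)"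

definition shannon_H :: "'a pmf \<Rightarrow> real" where
  "shannon_H p = - (\<Sum>x\<in>set_pmf p. pmf p x * log 2 (pmf p x))"

definition cond_entropy_pmf :: "('a \<times> 'b) pmf \<Rightarrow> real" where
  "cond_entropy_pmf p = shannon_H p - shannon_H (map_pmf snd p)"

definition mutual_info_pmf :: "('a \<times> 'b) pmf \<Rightarrow> real" where
  "mutual_info_pmf p = shannon_H (map_pmf fst p) + shannon_H (map_pmf snd p) - shannon_H p"

text \<open>Users are indexed 0..L-1 (paper: 1..L). The inputs X_0..X_{L-1} are independent,
  X_l ~ qX l; the channel W maps the input tuple (as a list of length L) to an output distribution.\<close>
definition joint_XZ :: "nat \<Rightarrow> (nat \<Rightarrow> bool pmf) \<Rightarrow> (bool list \<Rightarrow> 'z pmf) \<Rightarrow> (bool list \<times> 'z) pmf" where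
  "joint_XZ L qX W = bind_pmf (seq_pmf (map qX [0..<L])) (\<lambda>xs. map_pmf (\<lambda>z. (xs, z)) (W xs))"

definition qZ :: "nat \<Rightarrow> (nat \<Rightarrow> bool pmf) \<Rightarrow> (bool list \<Rightarrow> 'z pmf) \<Rightarrow> 'z pmf" where
  "qZ L qX W = map_pmf snd (joint_XZ L qX W)"

text \<open>Joint distribution of (X_l, (Z, X_{1:l-1})) (0-indexed: X_l with the earlier X_0..X_{l-1}).\<close>
definition XZX :: "nat \<Rightarrow> (nat \<Rightarrow> bool pmf) \<Rightarrow> (bool list \<Rightarrow> 'z pmf) \<Rightarrow> nat \<Rightarrow> (bool \<times> ('z \<times> bool list)) pmf" where
  "XZX L qX W l = map_pmf (\<lambda>(xs, z). (xs ! l, (z, take l xs))) (joint_XZ L qX W)"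

definition two_universal :: "nat \<Rightarrow> nat \<Rightarrow> (bool list \<Rightarrow> bool list) set \<Rightarrow> bool" where
  "two_universal n r H \<longleftrightarrow> finite H \<and> H \<noteq> {} \<and>
     (\<forall>h\<in>H. \<forall>x. length x = n \<longrightarrow> length (h x) = r) \<and>
     (\<forall>x y. length x = n \<longrightarrow> length y = n \<longrightarrow> x \<noteq> y \<longrightarrow>
        real (card {h\<in>H. h x = h y}) \<le> real (card H) / 2 ^ r)"

text \<open>Memoryless channel applied letterwise to N uses; Xs is the list of the L input strings.\<close>
definition chanN :: "(bool list \<Rightarrow> 'z pmf) \<Rightarrow> nat \<Rightarrow> bool list list \<Rightarrow> 'z list pmf" where
  "chanN W N Xs = seq_pmf (map (\<lambda>j. W (map (\<lambda>x. x ! j) Xs)) [0..<N])"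

definition first_block :: "nat \<Rightarrow> (nat \<Rightarrow> bool list \<Rightarrow> bool list) \<Rightarrow> (nat \<Rightarrow> nat) \<Rightarrow> bool list list pmf" where
  "first_block L e a = seq_pmf (map (\<lambda>l. map_pmf (e l) (unif_bits (a l))) [0..<L])"

definition next_block :: "nat \<Rightarrow> (nat \<Rightarrow> bool list \<Rightarrow> bool list) \<Rightarrow> (nat \<Rightarrow> nat)
    \<Rightarrow> (bool list \<Rightarrow> bool list) list \<Rightarrow> bool list list \<Rightarrow> bool list list pmf" where
  "next_block L e m G Xprev =
     seq_pmf (map (\<lambda>l. map_pmf (\<lambda>E. e l ((G ! l) (Xprev ! l) @ E)) (unif_bits (m l))) [0..<L])"

fun run_blocks :: "nat \<Rightarrow> (nat \<Rightarrow> bool list \<Rightarrow> bool list) \<Rightarrow> (nat \<Rightarrow> nat) \<Rightarrow> (bool list \<Rightarrow> 'z pmf)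
    \<Rightarrow> nat \<Rightarrow> (bool list \<Rightarrow> bool list) list \<Rightarrow> nat \<Rightarrow> bool list list \<Rightarrow> 'z list list pmf" where
  "run_blocks L e m W N G 0 Xprev = return_pmf []"
| "run_blocks L e m W N G (Suc n) Xprev =
     bind_pmf (next_block L e m G Xprev) (\<lambda>X.
     bind_pmf (chanN W N X) (\<lambda>Z.
     map_pmf (\<lambda>Zs. Z # Zs) (run_blocks L e m W N G n X)))"

definition scheme_output :: "nat \<Rightarrow> (nat \<Rightarrow> bool list \<Rightarrow> bool list) \<Rightarrow> (nat \<Rightarrow> nat) \<Rightarrow> (nat \<Rightarrow> nat)
    \<Rightarrow> (bool list \<Rightarrow> 'z pmf) \<Rightarrow> nat \<Rightarrow> (nat \<Rightarrow> (bool list \<Rightarrow> bool list) set) \<Rightarrow> nat \<Rightarrow> 'z list pmf" where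
  "scheme_output L e a m W N Hf k =
     bind_pmf (seq_pmf (map (\<lambda>l. pmf_of_set (Hf l)) [0..<L])) (\<lambda>G.
     bind_pmf (first_block L e a) (\<lambda>X1.
     bind_pmf (chanN W N X1) (\<lambda>Z1.
     map_pmf (\<lambda>Zs. concat (Z1 # Zs)) (run_blocks L e m W N G (k - 1) X1))))"

definition delta_star_L :: "nat \<Rightarrow> nat \<Rightarrow> real" where
  "delta_star_L L N = log 2 (2 ^ L + 3) * sqrt (2 / real N * (real L + log 2 (real N)))"

definition eps2 :: "nat \<Rightarrow> nat \<Rightarrow> real \<Rightarrow> real" where
  "eps2 L N \<xi> = 2 * (delta_star_L L N + \<xi>)"

definition delta0 :: "nat \<Rightarrow> nat \<Rightarrow> real \<Rightarrow> real" where
  "delta0 L N \<xi> = 2 / real N + 2 powr (real L / 2) * 2 powr (- real N * \<xi> / 2)"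

text \<open>delta here is the value delta(N) of the encoders' approximation error.\<close>
definition delta_star :: "nat \<Rightarrow> nat \<Rightarrow> real \<Rightarrow> real \<Rightarrow> nat \<Rightarrow> real" where
  "delta_star L N \<xi> \<delta> j =
     real L * (\<delta> + delta0 L N \<xi>) * (real L ^ j - 1) / (real L - 1) + real L ^ (j + 1) * \<delta>"

definition delta2 :: "nat \<Rightarrow> nat \<Rightarrow> real \<Rightarrow> real \<Rightarrow> nat \<Rightarrow> real" where
  "delta2 L N \<xi> \<delta> k = (2 ^ (k - 1) - 1) * (4 * delta_star L N \<xi> \<delta> (k - 1) + 2 * delta0 L N \<xi>)"

end

theory Submission
  imports Defs
begin

(*
  The keys of block i + 1 are the hashes of the input strings of block i.  By the leftover hash
  lemma, smoothed with a conditional typicality bound (Chernoff's bound on the conditional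
  information density), the hash of user l's input string is close to uniform given the channel
  output and the inputs of the users before l; a hybrid argument over the L users bounds the
  distance of all keys from independent uniform ones by L (2/N + 2^(-N xi/2)).  Comparing the
  encoders' outputs with i.i.d. inputs costs L delta on each side, so every block after the first
  can be replaced by an independently encoded fresh block at the price of
  2 L delta + L (2/N + 2^(-N xi/2)).  After k - 1 such replacements the k blocks are independent,
  each within L delta of the i.i.d. output distribution, and the stated error terms dominate the
  resulting bound.
*)

section \<open>Variational distance of finitely supported distributions\<close>

lemma vdist_eq_sum:
  assumes "finite A" "set_pmf p \<subseteq> A" "set_pmf q \<subseteq> A"
  shows "vdist p q = (\<Sum>x\<in>A. \<bar>pmf p x - pmf q x\<bar>)"
proof -
  have "(\<Sum>\<^sub>\<infinity>x. \<bar>pmf p x - pmf q x\<bar>) = (\<Sum>\<^sub>\<infinity>x\<in>A. \<bar>pmf p x - pmf q x\<bar>)"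
  proof (intro infsum_cong_neutral)
    fix x assume "x \<in> UNIV - A"
    then have "pmf p x = 0" "pmf q x = 0"
      using assms by (auto simp: pmf_eq_0_set_pmf)
    then show "\<bar>pmf p x - pmf q x\<bar> = 0" by simp
  qed auto
  then show ?thesis
    using assms(1) by (simp add: vdist_def)
qed

lemma vdist_nonneg: "vdist p q \<ge> 0"
  unfolding vdist_def by (intro infsum_nonneg) auto

lemma vdist_self [simp]: "vdist p p = 0"
  unfolding vdist_def by simp

lemma vdist_commute: "vdist p q = vdist q p"
  unfolding vdist_def by (simp add: abs_minus_commute)

lemma vdist_triangle:
  assumes "finite (set_pmf p)" "finite (set_pmf q)" "finite (set_pmf s)"
  shows "vdist p s \<le> vdist p q + vdist q s"
proof -
  let ?A = "set_pmf p \<union> set_pmf q \<union> set_pmf s"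
  have "vdist p s = (\<Sum>x\<in>?A. \<bar>pmf p x - pmf s x\<bar>)"
    using assms by (intro vdist_eq_sum) auto
  also have "\<dots> \<le> (\<Sum>x\<in>?A. \<bar>pmf p x - pmf q x\<bar>) + (\<Sum>x\<in>?A. \<bar>pmf q x - pmf s x\<bar>)"
    by (simp add: sum.distrib[symmetric] sum_mono abs_triangle_ineq[THEN order_trans, of _ _])
  also have "\<dots> = vdist p q + vdist q s"
    using assms by (subst (1 2) vdist_eq_sum[of ?A]) auto
  finally show ?thesis .
qed

lemma pmf_bind_eq_sum:
  assumes "finite A" "set_pmf p \<subseteq> A"
  shows "pmf (bind_pmf p K) y = (\<Sum>x\<in>A. pmf p x * pmf (K x) y)"
  unfolding pmf_bind using assms
  by (subst integral_measure_pmf_real[of A]) (auto simp: mult.commute)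

lemma pmf_map_pmf_eq_sum:
  assumes "finite (set_pmf J)"
  shows "pmf (map_pmf g J) y = (\<Sum>w\<in>{w\<in>set_pmf J. g w = y}. pmf J w)"
proof -
  have "pmf (map_pmf g J) y = measure J (set_pmf J \<inter> g -` {y})"
    using measure_Int_set_pmf[of J "g -` {y}"] by (simp add: pmf_map Int_commute)
  also have "set_pmf J \<inter> g -` {y} = {w\<in>set_pmf J. g w = y}"
    by auto
  finally show ?thesis
    using assms by (simp add: measure_measure_pmf_finite)
qed

lemma vdist_bind_pmf_le:
  assumes fp: "finite (set_pmf p)" and fq: "finite (set_pmf q)"
    and fK: "\<And>x. x \<in> set_pmf p \<union> set_pmf q \<Longrightarrow> finite (set_pmf (K x))"
  shows "vdist (bind_pmf p K) (bind_pmf q K) \<le> vdist p q"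
proof -
  define A where "A = set_pmf p \<union> set_pmf q"
  define Y where "Y = (\<Union>x\<in>A. set_pmf (K x))"
  have fA: "finite A" and fY: "finite Y"
    using fp fq fK by (auto simp: Y_def A_def)
  have "vdist (bind_pmf p K) (bind_pmf q K) = (\<Sum>y\<in>Y. \<bar>\<Sum>x\<in>A. (pmf p x - pmf q x) * pmf (K x) y\<bar>)"
    using fA fY by (subst vdist_eq_sum[of Y])
      (auto simp: Y_def A_def pmf_bind_eq_sum[of A] sum_subtractf left_diff_distrib)
  also have "\<dots> \<le> (\<Sum>y\<in>Y. \<Sum>x\<in>A. \<bar>pmf p x - pmf q x\<bar> * pmf (K x) y)"
    by (intro sum_mono order.trans[OF sum_abs]) (simp add: abs_mult)
  also have "\<dots> = (\<Sum>x\<in>A. \<bar>pmf p x - pmf q x\<bar> * (\<Sum>y\<in>Y. pmf (K x) y))"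
    by (subst sum.swap) (simp add: sum_distrib_left)
  also have "\<dots> = (\<Sum>x\<in>A. \<bar>pmf p x - pmf q x\<bar>)"
    using fY by (intro sum.cong refl) (subst sum_pmf_eq_1, auto simp: Y_def)
  also have "\<dots> = vdist p q"
    using fA by (intro vdist_eq_sum[symmetric]) (auto simp: A_def)
  finally show ?thesis .
qed

lemma vdist_map_pmf_le:
  assumes "finite (set_pmf p)" "finite (set_pmf q)"
  shows "vdist (map_pmf f p) (map_pmf f q) \<le> vdist p q"
  unfolding map_pmf_def using assms by (intro vdist_bind_pmf_le) auto

lemma vdist_bind_pmf_kernels_le:
  assumes fp: "finite (set_pmf p)"
    and fK: "\<And>x. x \<in> set_pmf p \<Longrightarrow> finite (set_pmf (K1 x)) \<and> finite (set_pmf (K2 x))"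
    and B: "\<And>x. x \<in> set_pmf p \<Longrightarrow> vdist (K1 x) (K2 x) \<le> B"
  shows "vdist (bind_pmf p K1) (bind_pmf p K2) \<le> B"
proof -
  define A where "A = set_pmf p"
  define Y where "Y = (\<Union>x\<in>A. set_pmf (K1 x) \<union> set_pmf (K2 x))"
  have fA: "finite A" and fY: "finite Y"
    using fp fK by (auto simp: Y_def A_def)
  have "vdist (bind_pmf p K1) (bind_pmf p K2) = (\<Sum>y\<in>Y. \<bar>\<Sum>x\<in>A. pmf p x *
      (pmf (K1 x) y - pmf (K2 x) y)\<bar>)"
    using fA fY by (subst vdist_eq_sum[of Y])
      (auto simp: Y_def A_def pmf_bind_eq_sum[of A] sum_subtractf right_diff_distrib)
  also have "\<dots> \<le> (\<Sum>y\<in>Y. \<Sum>x\<in>A. pmf p x * \<bar>pmf (K1 x) y - pmf (K2 x) y\<bar>)"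
    by (intro sum_mono order.trans[OF sum_abs]) (simp add: abs_mult)
  also have "\<dots> = (\<Sum>x\<in>A. pmf p x * vdist (K1 x) (K2 x))"
    using fY by (subst sum.swap)
      (auto simp: sum_distrib_left[symmetric] Y_def A_def intro!: sum.cong
          arg_cong2[where f="(*)"] vdist_eq_sum[symmetric])
  also have "\<dots> \<le> (\<Sum>x\<in>A. pmf p x * B)"
    by (intro sum_mono mult_left_mono B) (auto simp: A_def)
  also have "\<dots> = B"
    using fA by (simp add: sum_distrib_right[symmetric] sum_pmf_eq_1 A_def)
  finally show ?thesis .
qed

lemma vdist_telescope_le:
  assumes "\<And>j. j \<le> n \<Longrightarrow> finite (set_pmf (P j))"
    and "\<And>j. j < n \<Longrightarrow> vdist (P (Suc j)) (P j) \<le> b"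
  shows "vdist (P n) (P 0) \<le> real n * b"
  using assms
proof (induction n)
  case (Suc n)
  have "vdist (P (Suc n)) (P 0) \<le> vdist (P (Suc n)) (P n) + vdist (P n) (P 0)"
    using Suc.prems(1) by (intro vdist_triangle) auto
  also have "\<dots> \<le> b + real n * b"
    using Suc by (intro add_mono) auto
  finally show ?case
    by (simp add: algebra_simps)
qed simp

lemma vdist_bind_pmf_change_prior_le:
  assumes fp: "finite (set_pmf p)" and fq: "finite (set_pmf q)"
    and fK: "\<And>x. finite (set_pmf (K1 x)) \<and> finite (set_pmf (K2 x))"
  shows "vdist (bind_pmf p K1) (bind_pmf p K2)
           \<le> 2 * vdist p q + vdist (bind_pmf q K1) (bind_pmf q K2)"
proof -
  have fin: "finite (set_pmf (bind_pmf p K1))" "finite (set_pmf (bind_pmf p K2))"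
    "finite (set_pmf (bind_pmf q K1))" "finite (set_pmf (bind_pmf q K2))"
    using fp fq fK by simp_all
  have "vdist (bind_pmf p K1) (bind_pmf p K2)
      \<le> vdist (bind_pmf p K1) (bind_pmf q K1) + vdist (bind_pmf q K1) (bind_pmf q K2)
        + vdist (bind_pmf q K2) (bind_pmf p K2)"
    using fin vdist_triangle[of "bind_pmf p K1" "bind_pmf q K1" "bind_pmf p K2"]
      vdist_triangle[of "bind_pmf q K1" "bind_pmf q K2" "bind_pmf p K2"] by linarith
  also have "\<dots> \<le> vdist p q + vdist (bind_pmf q K1) (bind_pmf q K2) + vdist q p"
    using fp fq fK by (intro add_mono vdist_bind_pmf_le) auto
  finally show ?thesis
    by (simp add: vdist_commute[of q p])
qed

section \<open>Product distributions\<close>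

lemma finite_set_pmf_finite_type: "finite (set_pmf (p :: 'a::finite pmf))"
  by (rule finite_subset[of _ UNIV]) auto

lemma set_pmf_seq_pmf: "set_pmf (seq_pmf ps) = {xs. list_all2 (\<lambda>x p. x \<in> set_pmf p) xs ps}"
  by (induction ps) (auto simp: list_all2_Cons2)

lemma length_of_set_pmf_seq_pmf: "xs \<in> set_pmf (seq_pmf ps) \<Longrightarrow> length xs = length ps"
  by (auto simp: set_pmf_seq_pmf list_all2_lengthD)

lemma finite_set_pmf_seq_pmf:
  "(\<And>p. p \<in> set ps \<Longrightarrow> finite (set_pmf p)) \<Longrightarrow> finite (set_pmf (seq_pmf ps))"
  by (induction ps) auto

lemma seq_pmf_map_pmf:
  "seq_pmf (map (\<lambda>l. map_pmf (f l) (p l)) ls) = map_pmf (map2 f ls) (seq_pmf (map p ls))"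
  by (induction ls) (simp_all add: map_bind_pmf bind_map_pmf map_pmf_comp)

lemma seq_pmf_bind_pmf:
  "seq_pmf (map (\<lambda>l. bind_pmf (p l) (\<lambda>u. map_pmf (g l u) (q l))) ls) =
   bind_pmf (seq_pmf (map p ls)) (\<lambda>us. map_pmf (\<lambda>vs. map (\<lambda>(l, u, v). g l u v) (zip ls (zip us vs)))
     (seq_pmf (map q ls)))"
proof (induction ls)
  case (Cons l ls)
  show ?case
    by (simp add: Cons bind_assoc_pmf bind_map_pmf map_bind_pmf map_pmf_comp bind_return_pmf)
      (subst bind_commute_pmf, simp add: map_pmf_def bind_assoc_pmf bind_return_pmf)
qed (simp add: bind_return_pmf)

lemma seq_pmf_append:
  "seq_pmf (ps @ qs) = bind_pmf (seq_pmf ps) (\<lambda>xs. map_pmf (\<lambda>ys. xs @ ys) (seq_pmf qs))"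
  by (induction ps) (simp_all add: bind_return_pmf bind_assoc_pmf map_bind_pmf bind_map_pmf
      map_pmf_comp append_Nil[abs_def] append_Cons[abs_def])

lemma map_pmf_nth_seq_pmf: "l < length ps \<Longrightarrow> map_pmf (\<lambda>xs. xs ! l) (seq_pmf ps) = ps ! l"
proof (induction ps arbitrary: l)
  case (Cons p ps)
  then show ?case
    by (cases l) (simp_all add: map_bind_pmf map_pmf_comp bind_return_pmf' flip: map_pmf_def)
qed simp

lemma seq_pmf_resample:
  "j < length ps \<Longrightarrow> bind_pmf (seq_pmf ps) (\<lambda>xs. map_pmf (\<lambda>x. xs[j := x]) (ps ! j)) = seq_pmf ps"
proof (induction ps arbitrary: j)
  case (Cons p ps)
  show ?case
  proof (cases j)
    case 0
    have "bind_pmf (seq_pmf (p # ps)) (\<lambda>xs. map_pmf (\<lambda>x. xs[j := x]) ((p # ps) ! j))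
        = bind_pmf (seq_pmf ps) (\<lambda>xs. map_pmf (\<lambda>x. x # xs) p)"
      using 0 by (simp add: bind_assoc_pmf bind_map_pmf bind_return_pmf map_pmf_def)
    also have "\<dots> = seq_pmf (p # ps)"
      by (simp add: map_pmf_def) (subst bind_commute_pmf, rule refl)
    finally show ?thesis .
  next
    case (Suc j')
    have "bind_pmf (seq_pmf (p # ps)) (\<lambda>xs. map_pmf (\<lambda>x. xs[j := x]) ((p # ps) ! j))
        = bind_pmf p (\<lambda>y. map_pmf (\<lambda>xs. y # xs)
            (bind_pmf (seq_pmf ps) (\<lambda>xs. map_pmf (\<lambda>x. xs[j' := x]) (ps ! j'))))"
      using Suc by (simp add: bind_assoc_pmf bind_map_pmf map_bind_pmf map_pmf_comp
          list_update_code(3)[abs_def])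
    then show ?thesis
      using Cons Suc by simp
  qed
qed simp

lemma pmf_bind_map_Cons:
  "pmf (bind_pmf p (\<lambda>x. map_pmf (\<lambda>xs. x # xs) M)) ys =
     (case ys of [] \<Rightarrow> 0 | v # vs \<Rightarrow> pmf p v * pmf M vs)"
proof (cases ys)
  case Nil
  have "(\<lambda>x. pmf (map_pmf (\<lambda>xs. x # xs) M) ys) = (\<lambda>x. 0)"
    using Nil by (auto simp: pmf_eq_0_set_pmf)
  then show ?thesis
    using Nil by (simp add: pmf_bind)
next
  case (Cons v vs)
  have "pmf (map_pmf (\<lambda>xs. x # xs) M) ys = indicator {v} x * pmf M vs" for x
    using Cons by (cases "x = v") (auto simp: pmf_map_inj' pmf_eq_0_set_pmf)
  then show ?thesis
    using Cons by (simp add: pmf_bind measure_pmf_single)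
qed

lemma pmf_seq_pmf:
  "pmf (seq_pmf ps) xs = (if length xs = length ps then prod_list (map2 pmf ps xs) else 0)"
proof (induction ps arbitrary: xs)
  case (Cons p ps)
  then show ?case
    by (cases xs) (simp_all add: pmf_bind_map_Cons)
qed (auto simp: pmf_return)

lemma iid_0 [simp]: "iid p 0 = return_pmf []"
  by (simp add: iid_def)

lemma iid_Suc: "iid p (Suc n) = bind_pmf p (\<lambda>x. map_pmf (\<lambda>xs. x # xs) (iid p n))"
  by (simp add: iid_def)

lemma iid_map_pmf: "iid (map_pmf f p) n = map_pmf (map f) (iid p n)"
  by (induction n) (simp_all add: iid_Suc map_bind_pmf bind_map_pmf map_pmf_comp)

lemma finite_set_pmf_iid: "finite (set_pmf p) \<Longrightarrow> finite (set_pmf (iid p n))"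
  unfolding iid_def by (rule finite_set_pmf_seq_pmf) auto

lemma length_of_set_pmf_iid: "ws \<in> set_pmf (iid p n) \<Longrightarrow> length ws = n"
  unfolding iid_def by (drule length_of_set_pmf_seq_pmf) simp

lemma set_of_set_pmf_iid: "ws \<in> set_pmf (iid p n) \<Longrightarrow> set ws \<subseteq> set_pmf p"
  unfolding iid_def by (auto simp: set_pmf_seq_pmf list_all2_conv_all_nth in_set_conv_nth)

lemma pmf_iid: "pmf (iid p n) ws = (if length ws = n then prod_list (map (pmf p) ws) else 0)"
  by (simp add: iid_def pmf_seq_pmf zip_replicate1 comp_def)

lemma iid_add: "iid q (m + n) = bind_pmf (iid q m) (\<lambda>xs. map_pmf (\<lambda>ys. xs @ ys) (iid q n))"
  by (simp add: iid_def replicate_add seq_pmf_append)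

lemma iid_mult: "iid q (k * n) = map_pmf concat (seq_pmf (replicate k (iid q n)))"
  by (induction k) (simp_all add: iid_add map_bind_pmf map_pmf_comp)

lemma vdist_seq_pmf_le:
  assumes "length ps = length qs" and "\<And>p. p \<in> set ps \<union> set qs \<Longrightarrow> finite (set_pmf p)"
  shows "vdist (seq_pmf ps) (seq_pmf qs) \<le> (\<Sum>i<length ps. vdist (ps ! i) (qs ! i))"
  using assms
proof (induction ps arbitrary: qs)
  case (Cons p ps)
  then obtain q qs' where qs: "qs = q # qs'"
    by (cases qs) auto
  have fin: "finite (set_pmf p)" "finite (set_pmf q)"
    "finite (set_pmf (seq_pmf ps))" "finite (set_pmf (seq_pmf qs'))"
    using Cons.prems qs by (auto intro!: finite_set_pmf_seq_pmf)
  let ?K = "\<lambda>ps x. map_pmf (\<lambda>xs. x # xs) (seq_pmf ps)"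
  have "vdist (seq_pmf (p # ps)) (seq_pmf qs)
      \<le> vdist (bind_pmf p (?K ps)) (bind_pmf p (?K qs'))
        + vdist (bind_pmf p (?K qs')) (bind_pmf q (?K qs'))"
    using fin qs by (simp add: vdist_triangle)
  also have "\<dots> \<le> vdist (seq_pmf ps) (seq_pmf qs') + vdist p q"
    using fin by (intro add_mono vdist_bind_pmf_kernels_le vdist_bind_pmf_le vdist_map_pmf_le) auto
  also have "\<dots> \<le> (\<Sum>i<length ps. vdist (ps ! i) (qs' ! i)) + vdist p q"
    using Cons qs by simp
  also have "\<dots> = (\<Sum>i<length (p # ps). vdist ((p # ps) ! i) (qs ! i))"
    unfolding qs by (simp only: length_Cons sum.lessThan_Suc_shift nth_Cons_0 nth_Cons_Suc
        add.commute)
  finally show ?case .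
qed simp

lemma vdist_bind_Cons_seq_pmf_le:
  assumes "finite (set_pmf p)" "finite (set_pmf R)" "\<And>q. q \<in> set ps \<Longrightarrow> finite (set_pmf q)"
  shows "vdist (bind_pmf p (\<lambda>x. map_pmf (\<lambda>xs. x # xs) R)) (seq_pmf (p # ps))
           \<le> vdist R (seq_pmf ps)"
  unfolding seq_pmf.simps using assms
  by (intro vdist_bind_pmf_kernels_le vdist_map_pmf_le) (auto intro: finite_set_pmf_seq_pmf)

section \<open>The memoryless channel on i.i.d. inputs\<close>

definition iid_inputs :: "nat \<Rightarrow> (nat \<Rightarrow> bool pmf) \<Rightarrow> nat \<Rightarrow> bool list list pmf" where
  "iid_inputs L qX N = seq_pmf (map (\<lambda>l. iid (qX l) N) [0..<L])"

text \<open>Transposes \<open>N\<close> letters (input tuple, output) into the \<open>L\<close> input strings.\<close>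

definition input_strings :: "nat \<Rightarrow> (bool list \<times> 'z) list \<Rightarrow> bool list list" where
  "input_strings L D = map (\<lambda>l. map (\<lambda>w. fst w ! l) D) [0..<L]"

lemma input_strings_Nil: "input_strings L [] = replicate L []"
  by (simp add: input_strings_def map_replicate_const)

lemma input_strings_Cons:
  "length (fst w) = L \<Longrightarrow> input_strings L (w # D) = map2 (#) (fst w) (input_strings L D)"
  by (intro nth_equalityI) (auto simp: input_strings_def)

lemma finite_set_pmf_iid_inputs: "finite (set_pmf (iid_inputs L qX N))"
  unfolding iid_inputs_def
  by (intro finite_set_pmf_seq_pmf) (auto intro: finite_set_pmf_iid finite_set_pmf_finite_type)

lemma iid_inputs_Suc:
  "iid_inputs L qX (Suc N) =
     bind_pmf (seq_pmf (map qX [0..<L])) (\<lambda>xs. map_pmf (map2 (#) xs) (iid_inputs L qX N))"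
proof -
  have zip_Cons: "map (\<lambda>(l, u, v). u # v) (zip ls (zip xs vs)) = map2 (#) xs vs"
    if "length xs = length ls" "length vs = length ls"
    for ls :: "nat list" and xs :: "'a list" and vs
    using that by (induction ls arbitrary: xs vs) (auto simp: length_Suc_conv)
  have "iid_inputs L qX (Suc N) = bind_pmf (seq_pmf (map qX [0..<L])) (\<lambda>us.
      map_pmf (\<lambda>vs. map (\<lambda>(l, u, v). u # v) (zip [0..<L] (zip us vs))) (iid_inputs L qX N))"
    unfolding iid_inputs_def iid_Suc by (rule seq_pmf_bind_pmf)
  also have "\<dots> = bind_pmf (seq_pmf (map qX [0..<L]))
      (\<lambda>xs. map_pmf (map2 (#) xs) (iid_inputs L qX N))"
    unfolding iid_inputs_def
    by (intro bind_pmf_cong map_pmf_cong refl zip_Cons) (auto dest: length_of_set_pmf_seq_pmf)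
  finally show ?thesis .
qed

lemma chanN_0 [simp]: "chanN W 0 X = return_pmf []"
  by (simp add: chanN_def)

lemma chanN_Suc:
  assumes "length xs = length Ys"
  shows "chanN W (Suc N) (map2 (#) xs Ys)
           = bind_pmf (W xs) (\<lambda>z. map_pmf (\<lambda>Z. z # Z) (chanN W N Ys))"
proof -
  have u: "[0..<Suc N] = 0 # map Suc [0..<N]"
    by (simp add: upt_conv_Cons map_Suc_upt)
  have "map (\<lambda>x. x ! 0) (map2 (#) xs Ys) = xs"
    using assms by (induction xs arbitrary: Ys) (auto simp: Suc_length_conv)
  moreover have "map (\<lambda>x. x ! Suc j) (map2 (#) xs Ys) = map (\<lambda>x. x ! j) Ys" for j
    using assms by (induction xs arbitrary: Ys) (auto simp: Suc_length_conv)
  ultimately show ?thesis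
    unfolding chanN_def by (simp only: u list.map seq_pmf.simps map_map comp_def)
qed

lemma finite_set_pmf_chanN: "finite (set_pmf (chanN (W :: bool list \<Rightarrow> 'z::finite pmf) N X))"
  unfolding chanN_def by (intro finite_set_pmf_seq_pmf) (auto intro: finite_set_pmf_finite_type)

lemma finite_set_pmf_joint_XZ:
  "finite (set_pmf (joint_XZ L qX (W :: bool list \<Rightarrow> 'z::finite pmf)))"
  unfolding joint_XZ_def by (auto intro!: finite_set_pmf_seq_pmf finite_set_pmf_finite_type)

lemma iid_inputs_chanN:
  "bind_pmf (iid_inputs L qX N) (\<lambda>X. map_pmf (\<lambda>Z. (X, Z)) (chanN W N X))
     = map_pmf (\<lambda>D. (input_strings L D, map snd D)) (iid (joint_XZ L qX W) N)"
proof (induction N)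
  case 0
  have "iid_inputs L qX 0 = return_pmf (replicate L [])"
  proof -
    have "seq_pmf (replicate n (return_pmf x)) = return_pmf (replicate n x)"
      for n and x :: "bool list"
      by (induction n) (simp_all add: bind_return_pmf)
    then show ?thesis
      by (simp add: iid_inputs_def map_replicate_const)
  qed
  then show ?case
    by (simp add: bind_return_pmf input_strings_Nil)
next
  case (Suc N)
  let ?P = "seq_pmf (map qX [0..<L])"
  let ?X = "iid_inputs L qX N"
  have "bind_pmf (iid_inputs L qX (Suc N)) (\<lambda>X. map_pmf (\<lambda>Z. (X, Z)) (chanN W (Suc N) X))
      = bind_pmf ?P (\<lambda>xs. bind_pmf ?X (\<lambda>Ys. bind_pmf (W xs) (\<lambda>z.
          map_pmf (\<lambda>Z. (map2 (#) xs Ys, z # Z)) (chanN W N Ys))))"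
    unfolding iid_inputs_Suc
    by (auto simp: bind_assoc_pmf bind_map_pmf map_bind_pmf map_pmf_comp chanN_Suc iid_inputs_def
        dest!: length_of_set_pmf_seq_pmf intro!: bind_pmf_cong)
  also have "\<dots> = bind_pmf (joint_XZ L qX W) (\<lambda>w.
      map_pmf (\<lambda>(Ys, Z). (map2 (#) (fst w) Ys, snd w # Z))
        (bind_pmf ?X (\<lambda>X. map_pmf (\<lambda>Z. (X, Z)) (chanN W N X))))"
    by (subst bind_commute_pmf)
      (simp add: joint_XZ_def bind_assoc_pmf bind_map_pmf map_bind_pmf map_pmf_comp)
  also have "\<dots> = bind_pmf (joint_XZ L qX W) (\<lambda>w.
      map_pmf (\<lambda>D. (input_strings L (w # D), map snd (w # D))) (iid (joint_XZ L qX W) N))"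
    unfolding Suc
    by (auto simp: map_pmf_comp joint_XZ_def input_strings_Cons
        dest!: length_of_set_pmf_seq_pmf intro!: bind_pmf_cong map_pmf_cong)
  also have "\<dots> = map_pmf (\<lambda>D. (input_strings L D, map snd D)) (iid (joint_XZ L qX W) (Suc N))"
    by (simp add: iid_Suc map_bind_pmf map_pmf_comp)
  finally show ?case .
qed

lemma iid_inputs_chanN_output: "bind_pmf (iid_inputs L qX N) (chanN W N) = iid (qZ L qX W) N"
proof -
  have "bind_pmf (iid_inputs L qX N) (chanN W N)
      = map_pmf snd (bind_pmf (iid_inputs L qX N) (\<lambda>X. map_pmf (\<lambda>Z. (X, Z)) (chanN W N X)))"
    by (simp add: map_bind_pmf map_pmf_comp)
  then show ?thesis
    by (simp add: iid_inputs_chanN map_pmf_comp qZ_def iid_map_pmf)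
qed

section \<open>The leftover hash lemma\<close>

abbreviation bitstrings :: "nat \<Rightarrow> bool list set" where
  "bitstrings r \<equiv> {s. length s = r}"

lemma finite_bitstrings: "finite (bitstrings r)"
  using finite_lists_length_eq[of "UNIV :: bool set" r] by simp

lemma card_bitstrings: "real (card (bitstrings r)) = 2 ^ r"
  using card_lists_length_eq[of "UNIV :: bool set" r] by simp

lemma bitstrings_nonempty: "bitstrings r \<noteq> {}"
  using length_replicate[of r False] by blast

lemma set_pmf_unif_bits: "set_pmf (unif_bits r) = bitstrings r"
  unfolding unif_bits_def using finite_bitstrings bitstrings_nonempty by simp

lemma pmf_unif_bits: "pmf (unif_bits r) s = (if length s = r then 1 / 2 ^ r else 0)"
  unfolding unif_bits_def using finite_bitstrings bitstrings_nonempty card_bitstrings[of r]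
  by (simp add: indicator_def)

lemma finite_set_pmf_unif_bits: "finite (set_pmf (unif_bits r))"
  by (simp add: set_pmf_unif_bits finite_bitstrings)

definition hash_load :: "'i set \<Rightarrow> ('i \<Rightarrow> bool list) \<Rightarrow> ('i \<Rightarrow> real)
    \<Rightarrow> (bool list \<Rightarrow> bool list) \<Rightarrow> bool list \<Rightarrow> real"
  where "hash_load I xv c h s = (\<Sum>i\<in>I. if h (xv i) = s then c i else 0)"

context
  fixes I :: "'i set" and xv :: "'i \<Rightarrow> bool list" and h :: "bool list \<Rightarrow> bool list" and r :: nat
  assumes finite_I: "finite I" and hash_length: "\<And>i. i \<in> I \<Longrightarrow> length (h (xv i)) = r"
begin

lemma sum_hash_load: "(\<Sum>s\<in>bitstrings r. hash_load I xv c h s) = (\<Sum>i\<in>I. c i)"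
  unfolding hash_load_def
  by (subst sum.swap) (use finite_bitstrings hash_length in \<open>simp add: sum.delta\<close>)

lemma sum_hash_load_squared:
  "(\<Sum>s\<in>bitstrings r. (hash_load I xv c h s)\<^sup>2)
     = (\<Sum>i\<in>I. \<Sum>j\<in>I. if h (xv i) = h (xv j) then c i * c j else 0)"
proof -
  have "(\<Sum>s\<in>bitstrings r. (hash_load I xv c h s)\<^sup>2)
      = (\<Sum>i\<in>I. \<Sum>j\<in>I. \<Sum>s\<in>bitstrings r.
          (if h (xv i) = s then c i else 0) * (if h (xv j) = s then c j else 0))"
    unfolding hash_load_def power2_eq_square sum_product
    by (simp add: sum.swap[of _ "bitstrings r"] sum.swap[of _ "bitstrings r" I])
  also have "\<dots> = (\<Sum>i\<in>I. \<Sum>j\<in>I. \<Sum>s\<in>bitstrings r.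
      if h (xv i) = s then (if h (xv i) = h (xv j) then c i * c j else 0) else 0)"
    by (intro sum.cong refl) auto
  also have "\<dots> = (\<Sum>i\<in>I. \<Sum>j\<in>I. if h (xv i) = h (xv j) then c i * c j else 0)"
    using finite_bitstrings hash_length by (simp add: sum.delta)
  finally show ?thesis .
qed

end

lemma sum_abs_le_sqrt_card_sum_sq:
  fixes f :: "'a \<Rightarrow> real"
  shows "(\<Sum>x\<in>A. \<bar>f x\<bar>) \<le> sqrt (real (card A) * (\<Sum>x\<in>A. (f x)\<^sup>2))"
  using sum_squared_le_sum_of_squares[of "\<lambda>x. \<bar>f x\<bar>" A]
  by (intro real_le_rsqrt) (simp add: mult.commute)

context
  fixes I :: "'i set" and xv :: "'i \<Rightarrow> bool list"
    and H :: "(bool list \<Rightarrow> bool list) set" and n r :: nat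
  assumes finite_I: "finite I" and two_universal: "two_universal n r H"
    and length_xv: "\<And>i. i \<in> I \<Longrightarrow> length (xv i) = n" and inj_xv: "inj_on xv I"
begin

lemma length_hash_xv: "h \<in> H \<Longrightarrow> i \<in> I \<Longrightarrow> length (h (xv i)) = r"
  using two_universal length_xv by (simp add: two_universal_def)

lemma sum_hash_collisions_le:
  assumes g: "\<And>i. i \<in> I \<Longrightarrow> g i \<ge> 0"
  shows "(\<Sum>h\<in>H. \<Sum>i\<in>I. \<Sum>j\<in>I. if h (xv i) = h (xv j) then g i * g j else 0)
           \<le> real (card H) * ((\<Sum>i\<in>I. g i)\<^sup>2 / 2 ^ r + (\<Sum>i\<in>I. (g i)\<^sup>2))"
proof -
  have finite_H: "finite H"
    using two_universal by (simp add: two_universal_def)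
  have card_coll: "real (card {h\<in>H. h (xv i) = h (xv j)})
      \<le> real (card H) / 2 ^ r + (if i = j then real (card H) else 0)" if "i \<in> I" "j \<in> I" for i j
  proof (cases "i = j")
    case True
    then show ?thesis
      using finite_H card_mono[of H "{h\<in>H. h (xv i) = h (xv j)}"] by simp
  next
    case False
    then have "xv i \<noteq> xv j"
      using inj_xv that by (auto simp: inj_on_def)
    then show ?thesis
      using two_universal length_xv that False by (simp add: two_universal_def)
  qed
  have "(\<Sum>h\<in>H. \<Sum>i\<in>I. \<Sum>j\<in>I. if h (xv i) = h (xv j) then g i * g j else 0)
      = (\<Sum>i\<in>I. \<Sum>j\<in>I. \<Sum>h\<in>H. if h (xv i) = h (xv j) then g i * g j else 0)"
    by (simp add: sum.swap[of _ H])
  also have "\<dots> = (\<Sum>i\<in>I. \<Sum>j\<in>I. g i * g j * real (card {h\<in>H. h (xv i) = h (xv j)}))"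
    using finite_H by (simp add: sum.If_cases Int_def mult.commute)
  also have "\<dots> \<le>
      (\<Sum>i\<in>I. \<Sum>j\<in>I. g i * g j * (real (card H) / 2 ^ r + (if i = j then real (card H) else 0)))"
    using g card_coll by (intro sum_mono mult_left_mono) auto
  also have "\<dots> = real (card H) * ((\<Sum>i\<in>I. g i)\<^sup>2 / 2 ^ r + (\<Sum>i\<in>I. (g i)\<^sup>2))"
    using finite_I
    by (simp add: distrib_left sum.distrib power2_eq_square sum_distrib_left sum_distrib_right
        sum_divide_distrib if_distrib[of "\<lambda>x. _ * x"] sum.delta mult_ac cong: if_cong)
  finally show ?thesis .
qed

lemma hash_load_variance_le:
  assumes g: "\<And>i. i \<in> I \<Longrightarrow> g i \<ge> 0"
  shows "(\<Sum>h\<in>H. \<Sum>s\<in>bitstrings r. (hash_load I xv g h s - (\<Sum>i\<in>I. g i) / 2 ^ r)\<^sup>2)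
           \<le> real (card H) * (\<Sum>i\<in>I. (g i)\<^sup>2)"
proof -
  define G where "G = (\<Sum>i\<in>I. g i)"
  have "(\<Sum>s\<in>bitstrings r. (hash_load I xv g h s - G / 2 ^ r)\<^sup>2)
      = (\<Sum>i\<in>I. \<Sum>j\<in>I. if h (xv i) = h (xv j) then g i * g j else 0) - G\<^sup>2 / 2 ^ r" if "h \<in> H" for h
  proof -
    have "(\<Sum>s\<in>bitstrings r. (hash_load I xv g h s - G / 2 ^ r)\<^sup>2)
        = (\<Sum>s\<in>bitstrings r. (hash_load I xv g h s)\<^sup>2)
          - 2 * (G / 2 ^ r) * (\<Sum>s\<in>bitstrings r. hash_load I xv g h s)
          + real (card (bitstrings r)) * (G / 2 ^ r)\<^sup>2"
      by (simp add: power2_diff sum.distrib sum_subtractf sum_distrib_left sum_divide_distrib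
          algebra_simps)
    then show ?thesis
      using sum_hash_load[where xv=xv and h=h, OF finite_I length_hash_xv[OF that], of g]
        sum_hash_load_squared[where xv=xv and h=h, OF finite_I length_hash_xv[OF that], of g]
      by (simp add: G_def card_bitstrings power2_eq_square field_simps)
  qed
  then have "(\<Sum>h\<in>H. \<Sum>s\<in>bitstrings r. (hash_load I xv g h s - G / 2 ^ r)\<^sup>2)
      = (\<Sum>h\<in>H. \<Sum>i\<in>I. \<Sum>j\<in>I. if h (xv i) = h (xv j) then g i * g j else 0)
        - real (card H) * G\<^sup>2 / 2 ^ r"
    by (simp add: sum_subtractf)
  also have "\<dots> \<le> real (card H) * (\<Sum>i\<in>I. (g i)\<^sup>2)"
    using sum_hash_collisions_le[OF g] by (simp add: G_def algebra_simps)
  finally show ?thesis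
    by (simp add: G_def)
qed

lemma hash_load_deviation_le:
  assumes g: "\<And>i. i \<in> I \<Longrightarrow> g i \<ge> 0"
  shows "(\<Sum>h\<in>H. \<Sum>s\<in>bitstrings r. \<bar>hash_load I xv g h s - (\<Sum>i\<in>I. g i) / 2 ^ r\<bar>)
           \<le> real (card H) * sqrt (2 ^ r * (\<Sum>i\<in>I. (g i)\<^sup>2))"
proof -
  define D where "D = (\<lambda>(h, s). hash_load I xv g h s - (\<Sum>i\<in>I. g i) / 2 ^ r)"
  have "(\<Sum>h\<in>H. \<Sum>s\<in>bitstrings r. \<bar>D (h, s)\<bar>) = (\<Sum>p\<in>H \<times> bitstrings r. \<bar>D p\<bar>)"
    by (simp add: sum.cartesian_product)
  also have "\<dots> \<le> sqrt (real (card H) * 2 ^ r * (\<Sum>h\<in>H. \<Sum>s\<in>bitstrings r. (D (h, s))\<^sup>2))"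
    using sum_abs_le_sqrt_card_sum_sq[of D "H \<times> bitstrings r"]
    by (simp add: sum.cartesian_product card_cartesian_product card_bitstrings)
  also have "\<dots> \<le> sqrt (real (card H) * 2 ^ r * (real (card H) * (\<Sum>i\<in>I. (g i)\<^sup>2)))"
    using hash_load_variance_le[OF g]
    by (intro real_sqrt_le_mono mult_left_mono) (simp_all add: D_def)
  also have "\<dots> = real (card H) * sqrt (2 ^ r * (\<Sum>i\<in>I. (g i)\<^sup>2))"
    by (simp add: real_sqrt_mult mult_ac)
  finally show ?thesis
    by (simp add: D_def)
qed

lemma hash_load_deviation_add_le:
  assumes b: "\<And>i. i \<in> I \<Longrightarrow> b i \<ge> 0"
  shows "(\<Sum>h\<in>H. \<Sum>s\<in>bitstrings r.
             \<bar>hash_load I xv (\<lambda>i. g i + b i) h s - (\<Sum>i\<in>I. g i + b i) / 2 ^ r\<bar>)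
           \<le> (\<Sum>h\<in>H. \<Sum>s\<in>bitstrings r. \<bar>hash_load I xv g h s - (\<Sum>i\<in>I. g i) / 2 ^ r\<bar>)
             + 2 * real (card H) * (\<Sum>i\<in>I. b i)"
proof -
  have "\<bar>hash_load I xv (\<lambda>i. g i + b i) h s - (\<Sum>i\<in>I. g i + b i) / 2 ^ r\<bar>
      \<le> \<bar>hash_load I xv g h s - (\<Sum>i\<in>I. g i) / 2 ^ r\<bar> + hash_load I xv b h s
        + (\<Sum>i\<in>I. b i) / 2 ^ r" for h s
  proof -
    have "hash_load I xv b h s \<ge> 0" "(\<Sum>i\<in>I. b i) \<ge> 0"
      using b by (auto simp: hash_load_def intro!: sum_nonneg)
    moreover have "hash_load I xv (\<lambda>i. g i + b i) h s = hash_load I xv g h s + hash_load I xv b h s"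
      by (simp add: hash_load_def if_distrib sum.distrib[symmetric] cong: if_cong)
    moreover have "\<bar>x + y - (z + w)\<bar> \<le> \<bar>x - z\<bar> + y + w" if "y \<ge> 0" "w \<ge> 0" for x y z w :: real
      using that by linarith
    ultimately show ?thesis
      by (simp add: sum.distrib add_divide_distrib)
  qed
  then have "(\<Sum>h\<in>H. \<Sum>s\<in>bitstrings r.
        \<bar>hash_load I xv (\<lambda>i. g i + b i) h s - (\<Sum>i\<in>I. g i + b i) / 2 ^ r\<bar>)
      \<le> (\<Sum>h\<in>H. \<Sum>s\<in>bitstrings r. \<bar>hash_load I xv g h s - (\<Sum>i\<in>I. g i) / 2 ^ r\<bar>)
        + (\<Sum>h\<in>H. \<Sum>s\<in>bitstrings r. hash_load I xv b h s)
        + (\<Sum>h\<in>H. \<Sum>s\<in>bitstrings r. (\<Sum>i\<in>I. b i) / 2 ^ r)"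
    by (simp only: sum.distrib[symmetric] sum_mono)
  also have "(\<Sum>h\<in>H. \<Sum>s\<in>bitstrings r. hash_load I xv b h s) = real (card H) * (\<Sum>i\<in>I. b i)"
  proof -
    have "(\<Sum>s\<in>bitstrings r. hash_load I xv b h s) = (\<Sum>i\<in>I. b i)" if "h \<in> H" for h
      using sum_hash_load[where xv=xv and h=h, OF finite_I length_hash_xv[OF that]] .
    then show ?thesis
      by simp
  qed
  finally show ?thesis
    by (simp add: card_bitstrings algebra_simps)
qed

lemma smooth_hash_load_deviation_le:
  assumes f: "\<And>i. i \<in> I \<Longrightarrow> f i \<ge> 0" and \<theta>: "\<theta> \<ge> 0"
    and good: "\<And>i. i \<in> I \<Longrightarrow> i \<notin> S \<Longrightarrow> f i \<le> \<theta> * (\<Sum>j\<in>I. f j)"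
  shows "(\<Sum>h\<in>H. \<Sum>s\<in>bitstrings r. \<bar>hash_load I xv f h s - (\<Sum>i\<in>I. f i) / 2 ^ r\<bar>)
           \<le> real (card H) * (2 * (\<Sum>i\<in>I \<inter> S. f i) + sqrt (2 ^ r * \<theta>) * (\<Sum>i\<in>I. f i))"
proof -
  define g where "g i = (if i \<in> S then 0 else f i)" for i
  define b where "b i = (if i \<in> S then f i else 0)" for i
  define F where "F = (\<Sum>i\<in>I. f i)"
  have F: "F \<ge> 0"
    using f by (simp add: F_def sum_nonneg)
  have g: "0 \<le> g i" "g i \<le> \<theta> * F" if "i \<in> I" for i
    using f good that \<theta> F by (auto simp: g_def F_def)
  have "(\<Sum>i\<in>I. (g i)\<^sup>2) \<le> (\<Sum>i\<in>I. g i * (\<theta> * F))"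
    using g by (intro sum_mono) (simp add: power2_eq_square mult_left_mono)
  also have "\<dots> = (\<Sum>i\<in>I. g i) * (\<theta> * F)"
    by (simp add: sum_distrib_right)
  also have "\<dots> \<le> F * (\<theta> * F)"
    using f \<theta> F unfolding F_def by (intro mult_right_mono sum_mono) (auto simp: g_def)
  finally have "sqrt (2 ^ r * (\<Sum>i\<in>I. (g i)\<^sup>2)) \<le> sqrt (2 ^ r * \<theta> * F\<^sup>2)"
    by (intro real_sqrt_le_mono) (simp add: power2_eq_square mult_ac)
  also have "\<dots> = sqrt (2 ^ r * \<theta>) * F"
    using F by (simp add: real_sqrt_mult)
  finally have "sqrt (2 ^ r * (\<Sum>i\<in>I. (g i)\<^sup>2)) \<le> sqrt (2 ^ r * \<theta>) * F" .
  then have good_part: "(\<Sum>h\<in>H. \<Sum>s\<in>bitstrings r. \<bar>hash_load I xv g h s - (\<Sum>i\<in>I. g i) / 2 ^ r\<bar>)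
      \<le> real (card H) * (sqrt (2 ^ r * \<theta>) * F)"
    using g by (intro order_trans[OF hash_load_deviation_le] mult_left_mono) auto
  have f_split: "(\<lambda>i. g i + b i) = f"
    by (auto simp: g_def b_def)
  have "(\<Sum>h\<in>H. \<Sum>s\<in>bitstrings r. \<bar>hash_load I xv f h s - F / 2 ^ r\<bar>)
      \<le> (\<Sum>h\<in>H. \<Sum>s\<in>bitstrings r. \<bar>hash_load I xv g h s - (\<Sum>i\<in>I. g i) / 2 ^ r\<bar>)
        + 2 * real (card H) * (\<Sum>i\<in>I. b i)"
    using hash_load_deviation_add_le[of b g] f unfolding f_split F_def by (auto simp: b_def)
  also have "\<dots> \<le> real (card H) * (sqrt (2 ^ r * \<theta>) * F)
      + 2 * real (card H) * (\<Sum>i\<in>I \<inter> S. f i)"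
    using good_part finite_I by (simp add: b_def sum.If_cases)
  finally show ?thesis
    by (simp add: F_def algebra_simps)
qed

end

definition hash_real :: "(bool list \<times> 'y) pmf \<Rightarrow> (bool list \<Rightarrow> bool list) set
    \<Rightarrow> ((bool list \<Rightarrow> bool list) \<times> bool list \<times> 'y) pmf" where
  "hash_real J H = bind_pmf J (\<lambda>w. map_pmf (\<lambda>h. (h, h (fst w), snd w)) (pmf_of_set H))"

definition hash_ideal :: "(bool list \<times> 'y) pmf \<Rightarrow> (bool list \<Rightarrow> bool list) set \<Rightarrow> nat
    \<Rightarrow> ((bool list \<Rightarrow> bool list) \<times> bool list \<times> 'y) pmf" where
  "hash_ideal J H r = bind_pmf J (\<lambda>w. bind_pmf (pmf_of_set H)
      (\<lambda>h. map_pmf (\<lambda>u. (h, u, snd w)) (unif_bits r)))"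

context
  fixes H :: "(bool list \<Rightarrow> bool list) set"
  assumes finite_H: "finite H" and H_nonempty: "H \<noteq> {}"
begin

lemma pmf_hash_real:
  assumes "finite (set_pmf J)"
  shows "pmf (hash_real J H) (h, s, y) =
    (if h \<in> H then hash_load {w\<in>set_pmf J. snd w = y} fst (pmf J) h s / card H else 0)"
proof -
  have inner: "pmf (map_pmf (\<lambda>h. (h, h x, y')) (pmf_of_set H)) (h, s, y)
      = (if h \<in> H \<and> h x = s \<and> y' = y then 1 / card H else 0)" for x y'
  proof (cases "h x = s \<and> y' = y")
    case True
    then show ?thesis
      using pmf_map_inj'[of "\<lambda>h. (h, h x, y')" "pmf_of_set H" h] finite_H H_nonempty
      by (auto simp: inj_on_def indicator_def)
  qed (auto simp: pmf_eq_0_set_pmf)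
  have "pmf (hash_real J H) (h, s, y)
      = (\<Sum>w\<in>set_pmf J. pmf J w * (if h \<in> H \<and> h (fst w) = s \<and> snd w = y then 1 / card H else 0))"
    unfolding hash_real_def using assms
    by (subst pmf_bind_eq_sum[of "set_pmf J"]) (simp_all add: inner)
  also have "\<dots> = (if h \<in> H
      then (\<Sum>w\<in>set_pmf J. if snd w = y then (if h (fst w) = s then pmf J w else 0) else 0) / card H
      else 0)"
    by (auto simp: sum_divide_distrib intro!: sum.cong)
  finally show ?thesis
    using assms by (simp add: sum.inter_filter hash_load_def)
qed

lemma pmf_hash_ideal:
  assumes "finite (set_pmf J)"
  shows "pmf (hash_ideal J H r) (h, s, y) =
    (if h \<in> H \<and> length s = r then pmf (map_pmf snd J) y / (card H * 2 ^ r) else 0)"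
proof -
  have unif: "pmf (map_pmf (\<lambda>u. (h', u, y')) (unif_bits r)) (h, s, y)
      = (if h' = h \<and> y' = y \<and> length s = r then 1 / 2 ^ r else 0)" for h' y'
  proof (cases "h' = h \<and> y' = y")
    case True
    then show ?thesis
      using pmf_map_inj'[of "\<lambda>u. (h', u, y')" "unif_bits r" s]
      by (auto simp: inj_on_def pmf_unif_bits)
  qed (auto simp: pmf_eq_0_set_pmf)
  have inner: "pmf (bind_pmf (pmf_of_set H) (\<lambda>h. map_pmf (\<lambda>u. (h, u, y')) (unif_bits r))) (h, s, y)
      = (if h \<in> H \<and> length s = r \<and> y' = y then 1 / (card H * 2 ^ r) else 0)" for y'
  proof -
    have "pmf (bind_pmf (pmf_of_set H) (\<lambda>h. map_pmf (\<lambda>u. (h, u, y')) (unif_bits r))) (h, s, y)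
        = (\<Sum>h'\<in>H. pmf (pmf_of_set H) h'
            * (if h' = h \<and> y' = y \<and> length s = r then 1 / 2 ^ r else 0))"
      using finite_H H_nonempty by (subst pmf_bind_eq_sum[of H]) (simp_all add: unif)
    also have "\<dots> =
        (\<Sum>h'\<in>H. if h' = h then (if y' = y \<and> length s = r then 1 / (card H * 2 ^ r) else 0) else 0)"
      using finite_H H_nonempty by (intro sum.cong refl) auto
    finally show ?thesis
      using finite_H by (simp add: sum.delta)
  qed
  have "pmf (hash_ideal J H r) (h, s, y)
      = (\<Sum>w\<in>set_pmf J. pmf J w
          * (if h \<in> H \<and> length s = r \<and> snd w = y then 1 / (card H * 2 ^ r) else 0))"
    unfolding hash_ideal_def using assms
    by (subst pmf_bind_eq_sum[of "set_pmf J"]) (simp_all add: inner)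
  also have "\<dots> = (if h \<in> H \<and> length s = r then (\<Sum>w\<in>set_pmf J. if snd w = y then pmf J w else 0)
      / (card H * 2 ^ r) else 0)"
    by (auto simp: sum_divide_distrib intro!: sum.cong)
  finally show ?thesis
    using assms by (simp add: sum.inter_filter pmf_map_pmf_eq_sum)
qed

end

text \<open>The smoothed leftover hash lemma: the exceptional pairs in \<open>S\<close> are paid for in full, the
  others are handled by counting collisions.\<close>

context
  fixes J :: "(bool list \<times> 'y) pmf" and H :: "(bool list \<Rightarrow> bool list) set" and n r :: nat
    and \<theta> :: real and S :: "(bool list \<times> 'y) set"
  assumes finite_J: "finite (set_pmf J)" and length_J: "\<And>w. w \<in> set_pmf J \<Longrightarrow> length (fst w) = n"
    and two_universal: "two_universal n r H" and \<theta>: "\<theta> \<ge> 0"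
    and good: "\<And>w. w \<in> set_pmf J \<Longrightarrow> w \<notin> S \<Longrightarrow> pmf J w \<le> \<theta> * pmf (map_pmf snd J) (snd w)"
begin

lemma sum_abs_pmf_hash_fibre_le:
  "(\<Sum>h\<in>H. \<Sum>s\<in>bitstrings r. \<bar>pmf (hash_real J H) (h, s, y) - pmf (hash_ideal J H r) (h, s, y)\<bar>)
     \<le> 2 * (\<Sum>w\<in>{w\<in>set_pmf J. snd w = y} \<inter> S. pmf J w) + sqrt (2 ^ r * \<theta>) * pmf (map_pmf snd J) y"
proof -
  define A where "A = {w\<in>set_pmf J. snd w = y}"
  have H: "finite H" "H \<noteq> {}"
    using two_universal by (auto simp: two_universal_def)
  have "(\<Sum>h\<in>H. \<Sum>s\<in>bitstrings r. \<bar>hash_load A fst (pmf J) h s - (\<Sum>w\<in>A. pmf J w) / 2 ^ r\<bar>)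
      \<le> real (card H) * (2 * (\<Sum>w\<in>A \<inter> S. pmf J w) + sqrt (2 ^ r * \<theta>) * (\<Sum>w\<in>A. pmf J w))"
    using finite_J length_J good
    by (intro smooth_hash_load_deviation_le[OF _ two_universal _ _ _ \<theta>])
      (auto simp: A_def inj_on_def prod_eq_iff pmf_map_pmf_eq_sum)
  moreover have "card H > 0"
    using H by (simp add: card_gt_0_iff)
  ultimately show ?thesis
    using H finite_J
    by (simp add: pmf_hash_real pmf_hash_ideal pmf_map_pmf_eq_sum A_def sum_divide_distrib[symmetric]
        diff_divide_distrib[symmetric] divide_le_eq mult.commute field_simps)
qed

lemma leftover_hash_lemma:
  "vdist (hash_real J H) (hash_ideal J H r) \<le> 2 * measure_pmf.prob J S + sqrt (2 ^ r * \<theta>)"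
proof -
  define A where "A = set_pmf J"
  define Ay where "Ay y = {w\<in>A. snd w = y}" for y
  define Z where "Z = H \<times> bitstrings r \<times> snd ` A"
  have fA: "finite A" and fZ: "finite Z"
    using finite_J two_universal finite_bitstrings by (simp_all add: A_def Z_def two_universal_def)
  have "set_pmf (hash_real J H) \<subseteq> Z" "set_pmf (hash_ideal J H r) \<subseteq> Z"
    using two_universal length_J
    by (auto simp: hash_real_def hash_ideal_def Z_def A_def set_pmf_unif_bits two_universal_def)
  then have "vdist (hash_real J H) (hash_ideal J H r) = (\<Sum>h\<in>H. \<Sum>s\<in>bitstrings r. \<Sum>y\<in>snd ` A.
      \<bar>pmf (hash_real J H) (h, s, y) - pmf (hash_ideal J H r) (h, s, y)\<bar>)"
    using fZ by (simp add: vdist_eq_sum Z_def sum.cartesian_product)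
  also have "\<dots> = (\<Sum>y\<in>snd ` A. \<Sum>h\<in>H. \<Sum>s\<in>bitstrings r.
      \<bar>pmf (hash_real J H) (h, s, y) - pmf (hash_ideal J H r) (h, s, y)\<bar>)"
    by (simp add: sum.swap[of _ "snd ` A"])
  also have "\<dots> \<le> (\<Sum>y\<in>snd ` A. 2 * (\<Sum>w\<in>Ay y \<inter> S. pmf J w) + sqrt (2 ^ r * \<theta>) * (\<Sum>w\<in>Ay y. pmf J w))"
    using sum_abs_pmf_hash_fibre_le finite_J by (simp add: sum_mono Ay_def A_def pmf_map_pmf_eq_sum)
  also have "\<dots> = 2 * (\<Sum>w\<in>A \<inter> S. pmf J w) + sqrt (2 ^ r * \<theta>) * (\<Sum>w\<in>A. pmf J w)"
  proof -
    have fibres: "(\<Sum>y\<in>snd ` A. \<Sum>w\<in>Ay y. f w) = (\<Sum>w\<in>A. f w)" for f :: "_ \<Rightarrow> real"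
      using sum.image_gen[OF fA, of f snd] by (simp add: Ay_def)
    have "(\<Sum>w\<in>Ay y \<inter> S. pmf J w) = (\<Sum>w\<in>Ay y. if w \<in> S then pmf J w else 0)" for y
      using fA by (simp add: Ay_def sum.inter_restrict)
    then show ?thesis
      using fA fibres[of "\<lambda>w. if w \<in> S then pmf J w else 0"] fibres[of "pmf J"]
      by (simp add: sum.distrib sum_distrib_left[symmetric] sum.inter_restrict)
  qed
  also have "\<dots> = 2 * measure_pmf.prob J S + sqrt (2 ^ r * \<theta>)"
    using fA measure_measure_pmf_finite[of "S \<inter> A" J] measure_Int_set_pmf[of J S]
    by (simp add: A_def sum_pmf_eq_1 Int_commute)
  finally show ?thesis .
qed

end

section \<open>Concentration of the conditional information density\<close>

lemma ln_le_divide_exp1: "(x::real) > 0 \<Longrightarrow> ln x \<le> x / exp 1"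
  using ln_le_minus_one[of "x / exp 1"] by (simp add: ln_div)

lemma mult_ln_squared_le_1:
  fixes p :: real
  assumes "0 < p" "p \<le> 1"
  shows "p * (ln p)\<^sup>2 \<le> 1"
proof -
  define v where "v = sqrt p"
  have v: "0 < v" "v \<le> 1" and p: "p = v\<^sup>2"
    using assms by (auto simp: v_def)
  have "- ln v \<le> 1 / (v * exp 1)"
    using ln_le_divide_exp1[of "1 / v"] v by (simp add: ln_div)
  then have "v * (- ln v) \<le> 1 / exp 1"
    using v by (simp add: field_simps)
  also have "\<dots> \<le> 1 / 2"
    using exp_ge_add_one_self[of 1] by (simp add: divide_le_eq)
  moreover have "v * ln v \<le> 0"
    using v by (simp add: mult_nonneg_nonpos)
  ultimately have "\<bar>v * ln v\<bar> \<le> 1 / 2"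
    by linarith
  then have "(v * ln v)\<^sup>2 \<le> (1 / 2)\<^sup>2"
    by (simp add: power2_le_iff_abs_le)
  moreover have "p * (ln p)\<^sup>2 = 4 * (v * ln v)\<^sup>2"
    using v by (simp add: p ln_mult power2_eq_square algebra_simps)
  ultimately show ?thesis
    by (simp add: power2_eq_square)
qed

lemma exp_minus_le_quadratic:
  fixes u :: real
  assumes "u \<ge> 0"
  shows "exp (- u) \<le> 1 - u + u\<^sup>2 / 2"
proof -
  define g where "g x = 1 - x + x\<^sup>2 / 2 - exp (- x)" for x :: real
  have "g 0 \<le> g u"
  proof (rule DERIV_nonneg_imp_nondecreasing[OF assms])
    fix x :: real
    have "(g has_real_derivative (- 1 + x + exp (- x))) (at x)"
      unfolding g_def by (auto intro!: derivative_eq_intros simp: power2_eq_square)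
    moreover have "- 1 + x + exp (- x) \<ge> 0"
      using exp_ge_add_one_self[of "- x"] by simp
    ultimately show "\<exists>y. (g has_real_derivative y) (at x) \<and> 0 \<le> y"
      by blast
  qed
  then show ?thesis
    by (simp add: g_def)
qed

lemma prod_list_map_divide:
  fixes f g :: "'a \<Rightarrow> 'b::field"
  shows "prod_list (map (\<lambda>x. f x / g x) xs) = prod_list (map f xs) / prod_list (map g xs)"
  by (induction xs) simp_all

lemma prod_list_map_powr:
  fixes f :: "'a \<Rightarrow> real"
  shows "(\<And>x. x \<in> set xs \<Longrightarrow> f x \<ge> 0)
           \<Longrightarrow> prod_list (map (\<lambda>x. f x powr t) xs) = prod_list (map f xs) powr t"
proof (induction xs)
  case (Cons a xs)
  have "0 \<le> f a" "0 \<le> prod_list (map f xs)"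
    using Cons.prems by (auto intro!: prod_list_nonneg simp del: prod_list.Cons)
  then show ?case
    using Cons by (simp add: powr_mult)
qed simp

lemma expectation_iid_prod_list:
  fixes g :: "'a \<Rightarrow> real"
  assumes fQ: "finite (set_pmf Q)"
  shows "measure_pmf.expectation (iid Q N) (\<lambda>ws. prod_list (map g ws)) =
      (measure_pmf.expectation Q g) ^ N"
proof (induction N)
  case 0
  show ?case
    by (subst integral_measure_pmf[of "{[]}"]) auto
next
  case (Suc N)
  have "measure_pmf.expectation (iid Q (Suc N)) (\<lambda>ws. prod_list (map g ws))
      = (\<Sum>a\<in>set_pmf Q. pmf Q a
          * (g a * measure_pmf.expectation (iid Q N) (\<lambda>ws. prod_list (map g ws))))"
    unfolding iid_Suc using fQ
    by (subst pmf_expectation_bind[of "set_pmf Q"]) (auto intro: finite_set_pmf_iid)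
  also have "\<dots> = measure_pmf.expectation Q g
      * measure_pmf.expectation (iid Q N) (\<lambda>ws. prod_list (map g ws))"
    using fQ by (subst integral_measure_pmf[of "set_pmf Q"]) (auto simp: sum_distrib_left mult_ac)
  finally show ?case
    using Suc by simp
qed

lemma prob_iid_prod_list_ge_le:
  fixes g :: "'a \<Rightarrow> real"
  assumes fQ: "finite (set_pmf Q)" and g: "\<And>x. g x \<ge> 0" and c: "c > 0"
  shows "measure_pmf.prob (iid Q N) {ws. c \<le> prod_list (map g ws)} \<le>
      (measure_pmf.expectation Q g) ^ N / c"
proof -
  have "integrable (iid Q N) (\<lambda>ws. prod_list (map g ws))"
    by (intro integrable_measure_pmf_finite finite_set_pmf_iid fQ)
  moreover have "AE ws in iid Q N. 0 \<le> prod_list (map g ws)"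
    using g by (intro AE_I2 prod_list_nonneg) auto
  ultimately show ?thesis
    using integral_Markov_inequality_measure[of "iid Q N" "\<lambda>ws. prod_list (map g ws)" "{}" c] c
    by (simp add: expectation_iid_prod_list[OF fQ])
qed

lemma shannon_H_map_pmf_eq_sum:
  assumes fQ: "finite (set_pmf Q)"
  shows "shannon_H (map_pmf g Q) = - (\<Sum>w\<in>set_pmf Q. pmf Q w * log 2 (pmf (map_pmf g Q) (g w)))"
proof -
  have "(\<Sum>y\<in>g ` set_pmf Q. pmf (map_pmf g Q) y * log 2 (pmf (map_pmf g Q) y))
      = (\<Sum>y\<in>g ` set_pmf Q. \<Sum>w\<in>{w\<in>set_pmf Q. g w = y}. pmf Q w * log 2 (pmf (map_pmf g Q) (g w)))"
    using fQ by (intro sum.cong refl) (auto simp: pmf_map_pmf_eq_sum sum_distrib_right)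
  also have "\<dots> = (\<Sum>w\<in>set_pmf Q. pmf Q w * log 2 (pmf (map_pmf g Q) (g w)))"
    by (rule sum.image_gen[symmetric, OF fQ])
  finally show ?thesis
    by (simp add: shannon_H_def)
qed

lemma cond_entropy_pmf_eq_sum:
  assumes fQ: "finite (set_pmf Q)"
  shows "cond_entropy_pmf Q
           = - (\<Sum>w\<in>set_pmf Q. pmf Q w * log 2 (pmf Q w / pmf (map_pmf snd Q) (snd w)))"
proof -
  have "log 2 (pmf Q w / pmf (map_pmf snd Q) (snd w))
      = log 2 (pmf Q w) - log 2 (pmf (map_pmf snd Q) (snd w))" if "w \<in> set_pmf Q" for w
    using that by (simp add: log_divide_pos pmf_positive)
  then show ?thesis
    using shannon_H_map_pmf_eq_sum[OF fQ, of snd]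
    by (simp add: cond_entropy_pmf_def shannon_H_def right_diff_distrib sum_subtractf
        cong: sum.cong)
qed

lemma pmf_le_pmf_map_snd: "pmf Q w \<le> pmf (map_pmf snd Q) (snd w)"
proof -
  have "measure Q {w} \<le> measure Q (snd -` {snd w})"
    by (intro measure_pmf.finite_measure_mono) auto
  then show ?thesis
    by (simp add: measure_pmf_single pmf_map)
qed

context
  fixes Q :: "(bool \<times> 'y) pmf"
  assumes fQ: "finite (set_pmf Q)"
begin

text \<open>The bound \<open>2\<close> is the size of the alphabet of the first component.\<close>

lemma sum_ln_cond_density_squared_le:
  "(\<Sum>w\<in>set_pmf Q. pmf Q w * (ln (pmf Q w / pmf (map_pmf snd Q) (snd w)))\<^sup>2) \<le> 2"
proof -
  let ?QY = "map_pmf snd Q"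
  have "(\<Sum>w\<in>set_pmf Q. pmf Q w * (ln (pmf Q w / pmf ?QY (snd w)))\<^sup>2) \<le>
      (\<Sum>w\<in>set_pmf Q. pmf ?QY (snd w))"
  proof (intro sum_mono)
    fix w assume w: "w \<in> set_pmf Q"
    define f where "f = pmf Q w / pmf ?QY (snd w)"
    have QY: "pmf ?QY (snd w) > 0"
      using w by (simp add: pmf_positive)
    then have "0 < f" "f \<le> 1"
      using w pmf_le_pmf_map_snd[of Q w] by (auto simp: f_def pmf_positive divide_le_eq)
    then have "pmf ?QY (snd w) * (f * (ln f)\<^sup>2) \<le> pmf ?QY (snd w)"
      using QY mult_ln_squared_le_1[of f] by (simp add: mult_le_cancel_left1)
    then show "pmf Q w * (ln (pmf Q w / pmf ?QY (snd w)))\<^sup>2 \<le> pmf ?QY (snd w)"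
      using QY by (simp add: f_def)
  qed
  also have "\<dots> \<le> (\<Sum>w\<in>(UNIV :: bool set) \<times> set_pmf ?QY. pmf ?QY (snd w))"
  proof (rule sum_mono2)
    show "finite ((UNIV :: bool set) \<times> set_pmf ?QY)"
      using fQ by simp
    show "set_pmf Q \<subseteq> (UNIV :: bool set) \<times> set_pmf ?QY"
      by force
  qed auto
  also have "\<dots> = (\<Sum>x\<in>(UNIV :: bool set). \<Sum>y\<in>set_pmf ?QY. pmf ?QY y)"
    unfolding sum.cartesian_product by (simp add: case_prod_beta)
  also have "\<dots> = 2"
    using fQ by (simp add: sum_pmf_eq_1)
  finally show ?thesis .
qed

lemma expectation_cond_density_powr_le:
  assumes t: "t \<ge> 0"
  shows "measure_pmf.expectation Q (\<lambda>w. (pmf Q w / pmf (map_pmf snd Q) (snd w)) powr t)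
           \<le> exp (- t * cond_entropy_pmf Q * ln 2 + t\<^sup>2)"
proof -
  define f where "f w = pmf Q w / pmf (map_pmf snd Q) (snd w)" for w
  have f: "f w > 0" if "w \<in> set_pmf Q" for w
    using that by (simp add: f_def pmf_positive)
  have "f w powr t \<le> 1 + t * ln (f w) + t\<^sup>2 * (ln (f w))\<^sup>2 / 2" if "w \<in> set_pmf Q" for w
  proof -
    have "ln (f w) \<le> 0"
      using f[OF that] pmf_le_pmf_map_snd[of Q w] by (auto simp: f_def divide_le_eq_1)
    then show ?thesis
      using f[OF that] t exp_minus_le_quadratic[of "- (t * ln (f w))"]
      by (simp add: powr_def mult_nonneg_nonpos power_mult_distrib mult.commute)
  qed
  then have "measure_pmf.expectation Q (\<lambda>w. f w powr t)
      \<le> (\<Sum>w\<in>set_pmf Q. pmf Q w * (1 + t * ln (f w) + t\<^sup>2 * (ln (f w))\<^sup>2 / 2))"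
    using fQ by (subst integral_measure_pmf[of "set_pmf Q"]) (auto intro!: sum_mono mult_left_mono)
  also have "\<dots> = 1 + t * (\<Sum>w\<in>set_pmf Q. pmf Q w * ln (f w))
      + t\<^sup>2 / 2 * (\<Sum>w\<in>set_pmf Q. pmf Q w * (ln (f w))\<^sup>2)"
    using fQ by (simp add: sum.distrib sum_distrib_left distrib_left sum_pmf_eq_1 algebra_simps)
  also have "(\<Sum>w\<in>set_pmf Q. pmf Q w * ln (f w)) = - cond_entropy_pmf Q * ln 2"
    using cond_entropy_pmf_eq_sum[OF fQ] by (simp add: f_def log_def sum_divide_distrib[symmetric])
  also have "1 + t * (- cond_entropy_pmf Q * ln 2) + t\<^sup>2 / 2 * (\<Sum>w\<in>set_pmf Q. pmf Q w * (ln (f w))\<^sup>2)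
      \<le> 1 + (- t * cond_entropy_pmf Q * ln 2 + t\<^sup>2)"
    using sum_ln_cond_density_squared_le by (simp add: f_def mult_left_mono)
  also have "\<dots> \<le> exp (- t * cond_entropy_pmf Q * ln 2 + t\<^sup>2)"
    by (rule exp_ge_add_one_self)
  finally show ?thesis
    by (simp add: f_def)
qed

lemma powr_le_prod_list_cond_density:
  assumes ws: "ws \<in> set_pmf (iid Q N)" and \<theta>: "\<theta> \<ge> 0" and t: "t \<ge> 0"
    and large: "prod_list (map (pmf Q) ws) > \<theta> * prod_list (map (pmf (map_pmf snd Q)) (map snd ws))"
  shows "\<theta> powr t \<le> prod_list (map (\<lambda>w. (pmf Q w / pmf (map_pmf snd Q) (snd w)) powr t) ws)"
proof -
  define f where "f w = pmf Q w / pmf (map_pmf snd Q) (snd w)" for w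
  have "0 < prod_list (map (\<lambda>w. pmf (map_pmf snd Q) (snd w)) ws)"
    using set_of_set_pmf_iid[OF ws] by (induction ws) (auto simp: pmf_positive)
  moreover have "prod_list (map f ws)
      = prod_list (map (pmf Q) ws) / prod_list (map (\<lambda>w. pmf (map_pmf snd Q) (snd w)) ws)"
    unfolding f_def[abs_def] by (rule prod_list_map_divide)
  ultimately have "\<theta> < prod_list (map f ws)"
    using large by (simp add: pos_less_divide_eq comp_def)
  then have "\<theta> powr t \<le> prod_list (map f ws) powr t"
    using \<theta> t by (intro powr_mono2) auto
  also have "\<dots> = prod_list (map (\<lambda>w. f w powr t) ws)"
    by (rule prod_list_map_powr[symmetric]) (simp add: f_def)
  finally show ?thesis
    by (simp add: f_def)
qed

text \<open>Chernoff's bound with the exponent \<open>t = \<delta> ln 2 / 2\<close>.\<close>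

lemma prob_iid_cond_density_large_le:
  assumes \<delta>: "\<delta> > 0"
  shows "measure_pmf.prob (iid Q N) {ws. prod_list (map (pmf Q) ws) >
           2 powr (- (real N * (cond_entropy_pmf Q - \<delta>)))
             * prod_list (map (pmf (map_pmf snd Q)) (map snd ws))}
         \<le> exp (- (real N * (\<delta> * ln 2)\<^sup>2 / 4))"
proof -
  define Hc where "Hc = cond_entropy_pmf Q"
  define \<theta> where "\<theta> = 2 powr (- (real N * (Hc - \<delta>)))"
  define t where "t = \<delta> * ln 2 / 2"
  define g where "g w = (pmf Q w / pmf (map_pmf snd Q) (snd w)) powr t" for w
  have t: "t > 0"
    using \<delta> by (simp add: t_def)
  have "measure_pmf.prob (iid Q N)
      {ws. prod_list (map (pmf Q) ws) > \<theta> * prod_list (map (pmf (map_pmf snd Q)) (map snd ws))}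
      \<le> measure_pmf.prob (iid Q N) {ws. \<theta> powr t \<le> prod_list (map g ws)}"
    using t powr_le_prod_list_cond_density[of _ N \<theta> t]
    by (subst measure_Int_set_pmf[symmetric])
      (intro measure_pmf.finite_measure_mono, auto simp: \<theta>_def g_def[abs_def])
  also have "\<dots> \<le> (measure_pmf.expectation Q g) ^ N / \<theta> powr t"
    using fQ by (intro prob_iid_prod_list_ge_le) (simp_all add: \<theta>_def g_def[abs_def])
  also have "\<dots> \<le> exp (- t * Hc * ln 2 + t\<^sup>2) ^ N / \<theta> powr t"
    using expectation_cond_density_powr_le[of t] t
    by (intro divide_right_mono power_mono) (simp_all add: g_def[abs_def] Hc_def integral_nonneg_AE)
  also have "\<dots> = exp (- (real N * (\<delta> * ln 2)\<^sup>2 / 4))"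
    by (simp add: \<theta>_def powr_powr powr_def exp_of_nat_mult[symmetric] exp_diff[symmetric] t_def
        power2_eq_square algebra_simps)
  finally show ?thesis
    by (simp add: \<theta>_def Hc_def)
qed

end

definition unzip_pmf :: "('a \<times> 'b) list pmf \<Rightarrow> ('a list \<times> 'b list) pmf" where
  "unzip_pmf P = map_pmf (\<lambda>ws. (map fst ws, map snd ws)) P"

lemma pmf_unzip_pmf: "pmf (unzip_pmf P) (map fst ws, map snd ws) = pmf P ws"
proof -
  have "inj (\<lambda>ws. (map fst ws, map snd ws))"
    by (rule injI) (metis zip_map_fst_snd prod.inject)
  then show ?thesis
    unfolding unzip_pmf_def by (rule pmf_map_inj')
qed

text \<open>The atypical strings form the exceptional set of the smoothed leftover hash lemma.\<close>

lemma vdist_hash_iid_le: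
  fixes Q :: "(bool \<times> 'y) pmf"
  assumes fQ: "finite (set_pmf Q)" and tu: "two_universal N r H" and \<delta>: "\<delta> > 0"
  defines "J \<equiv> unzip_pmf (iid Q N)"
  shows "vdist (hash_real J H) (hash_ideal J H r)
           \<le> 2 * exp (- (real N * (\<delta> * ln 2)\<^sup>2 / 4))
             + sqrt (2 ^ r * 2 powr (- (real N * (cond_entropy_pmf Q - \<delta>))))"
proof -
  define \<theta> where "\<theta> = 2 powr (- (real N * (cond_entropy_pmf Q - \<delta>)))"
  define S where "S = {w. pmf J w > \<theta> * pmf (map_pmf snd J) (snd w)}"
  have marginal: "map_pmf snd (unzip_pmf (iid Q N)) = iid (map_pmf snd Q) N"
    by (simp add: unzip_pmf_def map_pmf_comp iid_map_pmf)
  have "vdist (hash_real J H) (hash_ideal J H r) \<le> 2 * measure_pmf.prob J S + sqrt (2 ^ r * \<theta>)"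
  proof (rule leftover_hash_lemma[OF _ _ tu])
    show "finite (set_pmf J)"
      using fQ by (simp add: J_def unzip_pmf_def finite_set_pmf_iid)
    show "length (fst w) = N" if "w \<in> set_pmf J" for w
      using that by (auto simp: J_def unzip_pmf_def dest: length_of_set_pmf_iid)
  qed (auto simp: \<theta>_def S_def not_less)
  also have "measure_pmf.prob J S \<le> measure_pmf.prob (iid Q N) {ws. prod_list (map (pmf Q) ws) >
      \<theta> * prod_list (map (pmf (map_pmf snd Q)) (map snd ws))}"
  proof -
    have "measure_pmf.prob J S
        = measure_pmf.prob (iid Q N) ((\<lambda>ws. (map fst ws, map snd ws)) -` S \<inter> set_pmf (iid Q N))"
      by (simp add: J_def unzip_pmf_def measure_map_pmf measure_Int_set_pmf)
    also have "\<dots> \<le> measure_pmf.prob (iid Q N) {ws. prod_list (map (pmf Q) ws) >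
        \<theta> * prod_list (map (pmf (map_pmf snd Q)) (map snd ws))}"
      by (intro measure_pmf.finite_measure_mono)
        (auto simp: S_def J_def pmf_unzip_pmf marginal pmf_iid dest: length_of_set_pmf_iid)
    finally show ?thesis .
  qed
  also have "\<dots> \<le> exp (- (real N * (\<delta> * ln 2)\<^sup>2 / 4))"
    unfolding \<theta>_def by (rule prob_iid_cond_density_large_le[OF fQ \<delta>])
  finally show ?thesis
    by (simp add: \<theta>_def)
qed

lemma delta_star_L_pos: "L \<ge> 1 \<Longrightarrow> N \<ge> 1 \<Longrightarrow> delta_star_L L N > 0"
  by (simp add: delta_star_L_def add_pos_nonneg)

lemma exp_delta_star_L_le:
  assumes N: "N \<ge> 1"
  shows "exp (- (real N * (delta_star_L L N * ln 2)\<^sup>2 / 4)) \<le> 1 / real N"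
proof -
  define a where "a = ln (2 ^ L + 3 :: real)"
  have lg: "log 2 (real N) \<ge> 0"
    using N by simp
  have "ln 4 \<le> a"
    unfolding a_def by (subst ln_le_cancel_iff) (auto intro: add_pos_pos)
  moreover have "ln (4::real) = 2 * ln 2"
    using ln_realpow[of 2 2] by simp
  ultimately have a: "2 * ln 2 \<le> a" "1 \<le> a"
    using ln2_ge_two_thirds by linarith+
  moreover have "a \<le> a\<^sup>2"
    using a mult_left_mono[of 1 a a] by (simp add: power2_eq_square)
  ultimately have "2 * ln 2 \<le> a\<^sup>2"
    by linarith
  have "ln (real N) = ln 2 * log 2 (real N)"
    using N by (simp add: log_def)
  also have "\<dots> \<le> 2 * ln 2 * (real L + log 2 (real N)) / 2"
    by simp
  also have "\<dots> \<le> a\<^sup>2 * (real L + log 2 (real N)) / 2"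
    using \<open>2 * ln 2 \<le> a\<^sup>2\<close> lg by (intro divide_right_mono mult_right_mono) auto
  also have "\<dots> = real N * (delta_star_L L N * ln 2)\<^sup>2 / 4"
  proof -
    have "(sqrt (2 / real N * (real L + log 2 (real N))))\<^sup>2 = 2 / real N * (real L + log 2 (real N))"
      using lg by (intro real_sqrt_pow2) auto
    moreover have "delta_star_L L N * ln 2 = a * sqrt (2 / real N * (real L + log 2 (real N)))"
      by (simp add: delta_star_L_def a_def log_def)
    ultimately show ?thesis
      using N by (simp add: power_mult_distrib)
  qed
  finally have "exp (- (real N * (delta_star_L L N * ln 2)\<^sup>2 / 4)) \<le> exp (- ln (real N))"
    by simp
  also have "\<dots> = 1 / real N"
    using N by (simp add: exp_minus inverse_eq_divide)
  finally show ?thesis .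
qed

lemma hash_rate_eq:
  assumes "real r = real N * (H - eps2 L N \<xi> / 2)"
  shows "sqrt (2 ^ r * 2 powr (- (real N * (H - delta_star_L L N)))) = 2 powr (- real N * \<xi> / 2)"
proof -
  have "real r - real N * (H - delta_star_L L N) = - real N * \<xi>"
    using assms by (simp add: eps2_def algebra_simps add_divide_distrib)
  then have "(2::real) ^ r * 2 powr (- (real N * (H - delta_star_L L N))) = 2 powr (- real N * \<xi>)"
    by (simp add: powr_realpow[symmetric] powr_add[symmetric])
  then show ?thesis
    by (simp add: powr_half_sqrt_powr[symmetric])
qed

text \<open>Error of one hashing step: \<open>2/N\<close> from conditional typicality, \<open>2\<^sup>-\<^sup>N\<^sup>\<xi>\<^sup>/\<^sup>2\<close> from the
  leftover hash lemma.\<close>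

definition hash_error :: "nat \<Rightarrow> real \<Rightarrow> real" where
  "hash_error N \<xi> = 2 / real N + 2 powr (- real N * \<xi> / 2)"

text \<open>Cost of replacing a block by a freshly encoded one: the encoders' error on both sides of the
  comparison with i.i.d. inputs, and one hashing step per user.\<close>

definition block_error :: "nat \<Rightarrow> nat \<Rightarrow> real \<Rightarrow> real \<Rightarrow> real" where
  "block_error L N \<xi> \<delta> = 2 * (real L * \<delta>) + real L * hash_error N \<xi>"

lemma delta0_ge: "hash_error N \<xi> \<le> delta0 L N \<xi>"
proof -
  have "(1::real) \<le> 2 powr (real L / 2)"
    by (rule ge_one_powr_ge_zero) auto
  then have "2 powr (- real N * \<xi> / 2) \<le> 2 powr (real L / 2) * 2 powr (- real N * \<xi> / 2)"
    by (simp add: mult_le_cancel_right1)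
  then show ?thesis
    by (simp add: delta0_def hash_error_def)
qed

lemma delta0_nonneg: "0 \<le> delta0 L N \<xi>"
  by (simp add: delta0_def)

lemma delta_star_ge:
  assumes L: "L \<ge> 2" and j: "j \<ge> 1" and \<delta>: "\<delta> \<ge> 0"
  shows "real L * (\<delta> + delta0 L N \<xi>) \<le> delta_star L N \<xi> \<delta> j"
proof -
  have "real L ^ 1 \<le> real L ^ j"
    using L j by (intro power_increasing) auto
  then have "1 \<le> (real L ^ j - 1) / (real L - 1)"
    using L by (simp add: le_divide_eq)
  then have "real L * (\<delta> + delta0 L N \<xi>) * 1
      \<le> real L * (\<delta> + delta0 L N \<xi>) * ((real L ^ j - 1) / (real L - 1))"
    using \<delta> delta0_nonneg by (intro mult_left_mono) auto
  then have "real L * (\<delta> + delta0 L N \<xi>)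
      \<le> real L * (\<delta> + delta0 L N \<xi>) * (real L ^ j - 1) / (real L - 1)"
    by (simp only: mult_1_right times_divide_eq_right)
  moreover have "0 \<le> real L ^ (j + 1) * \<delta>"
    using \<delta> by simp
  ultimately show ?thesis
    unfolding delta_star_def by linarith
qed

lemma error_terms_le:
  assumes L: "L \<ge> 2" and k: "k \<ge> 1" and \<delta>: "\<delta> \<ge> 0"
  shows "real (k - 1) * block_error L N \<xi> \<delta> + real k * (real L * \<delta>)
         \<le> real (k - 1) * delta2 L N \<xi> \<delta> k + real k * delta_star L N \<xi> \<delta> k"
proof -
  have nn: "0 \<le> real L * \<delta>" "0 \<le> real L * delta0 L N \<xi>" "0 \<le> delta0 L N \<xi>"
    using \<delta> by (simp_all add: delta0_nonneg)
  have ds: "real L * \<delta> + real L * delta0 L N \<xi> \<le> delta_star L N \<xi> \<delta> j" if "j \<ge> 1" for j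
    using delta_star_ge[OF L that \<delta>, of N \<xi>] by (simp add: distrib_left)
  have last_block: "real k * (real L * \<delta>) \<le> real k * delta_star L N \<xi> \<delta> k"
    using ds[OF k] nn by (intro mult_left_mono) (linarith, simp)
  show ?thesis
  proof (cases "k = 1")
    case False
    define X where "X = 4 * delta_star L N \<xi> \<delta> (k - 1) + 2 * delta0 L N \<xi>"
    have dsk: "real L * \<delta> + real L * delta0 L N \<xi> \<le> delta_star L N \<xi> \<delta> (k - 1)"
      using False k by (intro ds) auto
    have "real L * hash_error N \<xi> \<le> real L * delta0 L N \<xi>"
      by (intro mult_left_mono delta0_ge) auto
    then have "block_error L N \<xi> \<delta> \<le> X"
      using dsk nn unfolding X_def block_error_def by linarith
    moreover have "2 ^ 1 \<le> (2::real) ^ (k - 1)"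
      using False k by (intro power_increasing) auto
    then have "1 \<le> (2::real) ^ (k - 1) - 1"
      by simp
    then have "1 * X \<le> ((2::real) ^ (k - 1) - 1) * X"
      using dsk nn unfolding X_def by (intro mult_right_mono) linarith+
    ultimately have "block_error L N \<xi> \<delta> \<le> delta2 L N \<xi> \<delta> k"
      by (simp add: delta2_def X_def)
    then show ?thesis
      by (intro add_mono[OF mult_left_mono last_block]) auto
  qed (use last_block in simp)
qed

section \<open>Hybrid argument over the users\<close>

definition hash_choice :: "nat \<Rightarrow> (nat \<Rightarrow> (bool list \<Rightarrow> bool list) set)
    \<Rightarrow> (bool list \<Rightarrow> bool list) list pmf" where
  "hash_choice L Hf = seq_pmf (map (\<lambda>l. pmf_of_set (Hf l)) [0..<L])"

definition unif_strings :: "nat \<Rightarrow> (nat \<Rightarrow> nat) \<Rightarrow> bool list list pmf" where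
  "unif_strings L r = seq_pmf (map (\<lambda>l. unif_bits (r l)) [0..<L])"

definition hybrid_keys :: "nat \<Rightarrow> nat \<Rightarrow> (bool list \<Rightarrow> bool list) list \<Rightarrow> (bool list \<times> 'z) list
    \<Rightarrow> bool list list \<Rightarrow> bool list list" where
  "hybrid_keys L j G D Us =
     map (\<lambda>l. if l < j then (G ! l) (input_strings L D ! l) else Us ! l) [0..<L]"

definition hybrid :: "nat \<Rightarrow> (nat \<Rightarrow> bool pmf) \<Rightarrow> (bool list \<Rightarrow> 'z pmf)
    \<Rightarrow> (nat \<Rightarrow> (bool list \<Rightarrow> bool list) set) \<Rightarrow> (nat \<Rightarrow> nat) \<Rightarrow> nat \<Rightarrow> nat
    \<Rightarrow> ((bool list \<Rightarrow> bool list) list \<times> 'z list \<times> bool list list) pmf" where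
  "hybrid L qX W Hf r N j =
     bind_pmf (hash_choice L Hf) (\<lambda>G. bind_pmf (iid (joint_XZ L qX W) N) (\<lambda>D.
       map_pmf (\<lambda>Us. (G, map snd D, hybrid_keys L j G D Us)) (unif_strings L r)))"

text \<open>The paper's \<open>X\<^sub>j\<^sub>+\<^sub>1\<close> with side information \<open>(Z, X\<^sub>1\<^sub>:\<^sub>j)\<close> (users are indexed from \<open>0\<close>),
  letter by letter.\<close>

definition user_source :: "nat \<Rightarrow> (bool list \<times> 'z) list \<Rightarrow> bool list \<times> ('z \<times> bool list) list" where
  "user_source j D = (map (\<lambda>w. fst w ! j) D, map (\<lambda>w. (snd w, take j (fst w))) D)"

text \<open>Reassembles the outcome of the \<open>j\<close>-th hybrid from the hash function and key of user \<open>j\<close>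
  and the side information of \<open>user_source j\<close>.\<close>

definition hybrid_fill :: "nat \<Rightarrow> nat \<Rightarrow> (bool list \<Rightarrow> bool list) list \<Rightarrow> bool list list
    \<Rightarrow> (bool list \<Rightarrow> bool list) \<times> bool list \<times> ('z \<times> bool list) list
    \<Rightarrow> (bool list \<Rightarrow> bool list) list \<times> 'z list \<times> bool list list" where
  "hybrid_fill L j G Us = (\<lambda>(h, v, y). (G[j := h], map fst y,
     map (\<lambda>l. if l < j then (G ! l) (map (\<lambda>c. snd c ! l) y) else if l = j then v else Us ! l)
       [0..<L]))"

lemma length_of_set_pmf_hash_choice: "G \<in> set_pmf (hash_choice L Hf) \<Longrightarrow> length G = L"
  unfolding hash_choice_def by (drule length_of_set_pmf_seq_pmf) simp

lemma length_of_set_pmf_unif_strings: "Us \<in> set_pmf (unif_strings L r) \<Longrightarrow> length Us = L"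
  unfolding unif_strings_def by (drule length_of_set_pmf_seq_pmf) simp

lemma finite_set_pmf_hash_choice:
  "(\<And>l. l < L \<Longrightarrow> two_universal n (r l) (Hf l)) \<Longrightarrow> finite (set_pmf (hash_choice L Hf))"
  unfolding hash_choice_def by (intro finite_set_pmf_seq_pmf) (auto simp: two_universal_def)

lemma finite_set_pmf_unif_strings: "finite (set_pmf (unif_strings L r))"
  unfolding unif_strings_def by (intro finite_set_pmf_seq_pmf) (auto simp: finite_set_pmf_unif_bits)

lemma bind_pmf_rotate3:
  "bind_pmf A (\<lambda>a. bind_pmf B (\<lambda>b. bind_pmf C (\<lambda>c. K a b c)))
     = bind_pmf C (\<lambda>c. bind_pmf B (\<lambda>b. bind_pmf A (\<lambda>a. K a b c)))"
  by (subst bind_commute_pmf) (subst (1 2) bind_commute_pmf, rule refl)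

lemma hybrid_resample:
  assumes "j < L"
  shows "hybrid L qX W Hf r N j' =
    bind_pmf (hash_choice L Hf) (\<lambda>G. bind_pmf (pmf_of_set (Hf j)) (\<lambda>h.
    bind_pmf (iid (joint_XZ L qX W) N) (\<lambda>D.
    bind_pmf (unif_strings L r) (\<lambda>Us. bind_pmf (unif_bits (r j)) (\<lambda>u.
      return_pmf (G[j := h], map snd D, hybrid_keys L j' (G[j := h]) D (Us[j := u])))))))"
proof -
  have resample:
    "bind_pmf (hash_choice L Hf) (\<lambda>G. map_pmf (\<lambda>h. G[j := h]) (pmf_of_set (Hf j))) = hash_choice L Hf"
    "bind_pmf (unif_strings L r) (\<lambda>Us. map_pmf (\<lambda>u. Us[j := u]) (unif_bits (r j))) = unif_strings L r"
    using seq_pmf_resample[of j "map (\<lambda>l. pmf_of_set (Hf l)) [0..<L]"]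
      seq_pmf_resample[of j "map (\<lambda>l. unif_bits (r l)) [0..<L]"] assms
    by (simp_all add: hash_choice_def unif_strings_def)
  have "hybrid L qX W Hf r N j' =
    bind_pmf (bind_pmf (hash_choice L Hf) (\<lambda>G. map_pmf (\<lambda>h. G[j := h]) (pmf_of_set (Hf j))))
      (\<lambda>G. bind_pmf (iid (joint_XZ L qX W) N) (\<lambda>D.
        map_pmf (\<lambda>Us. (G, map snd D, hybrid_keys L j' G D Us))
          (bind_pmf (unif_strings L r) (\<lambda>Us. map_pmf (\<lambda>u. Us[j := u]) (unif_bits (r j))))))"
    unfolding hybrid_def resample ..
  then show ?thesis
    by (simp add: bind_assoc_pmf bind_map_pmf map_bind_pmf map_pmf_def bind_return_pmf)
qed

lemma hybrid_Suc_eq: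
  assumes j: "j < L"
  shows "hybrid L qX W Hf r N (Suc j) =
    bind_pmf (hash_choice L Hf) (\<lambda>G. bind_pmf (unif_strings L r) (\<lambda>Us.
      map_pmf (hybrid_fill L j G Us)
        (hash_real (map_pmf (user_source j) (iid (joint_XZ L qX W) N)) (Hf j))))"
proof -
  have fill: "(G[j := h], map snd D, hybrid_keys L (Suc j) (G[j := h]) D (Us[j := u]))
      = hybrid_fill L j G Us (h, h (fst (user_source j D)), snd (user_source j D))"
    if "length G = L" for G h D Us u
    using j that
    by (auto simp: hybrid_fill_def hybrid_keys_def input_strings_def user_source_def nth_list_update
        comp_def nth_take intro!: map_cong)
  have "hybrid L qX W Hf r N (Suc j) =
    bind_pmf (hash_choice L Hf) (\<lambda>G. bind_pmf (pmf_of_set (Hf j)) (\<lambda>h.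
    bind_pmf (iid (joint_XZ L qX W) N) (\<lambda>D. bind_pmf (unif_strings L r) (\<lambda>Us.
      return_pmf (hybrid_fill L j G Us (h, h (fst (user_source j D)), snd (user_source j D)))))))"
    unfolding hybrid_resample[OF j]
    by (intro bind_pmf_cong refl) (simp add: fill length_of_set_pmf_hash_choice)
  also have "\<dots> =
    bind_pmf (hash_choice L Hf) (\<lambda>G. bind_pmf (unif_strings L r) (\<lambda>Us.
    bind_pmf (iid (joint_XZ L qX W) N) (\<lambda>D. bind_pmf (pmf_of_set (Hf j)) (\<lambda>h.
      return_pmf (hybrid_fill L j G Us (h, h (fst (user_source j D)), snd (user_source j D)))))))"
    by (intro bind_pmf_cong refl bind_pmf_rotate3)
  finally show ?thesis
    by (simp add: hash_real_def bind_map_pmf map_bind_pmf map_pmf_comp map_pmf_def bind_assoc_pmf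
        bind_return_pmf)
qed

lemma hybrid_eq:
  assumes j: "j < L"
  shows "hybrid L qX W Hf r N j =
    bind_pmf (hash_choice L Hf) (\<lambda>G. bind_pmf (unif_strings L r) (\<lambda>Us.
      map_pmf (hybrid_fill L j G Us)
        (hash_ideal (map_pmf (user_source j) (iid (joint_XZ L qX W) N)) (Hf j) (r j))))"
proof -
  have fill: "(G[j := h], map snd D, hybrid_keys L j (G[j := h]) D (Us[j := u]))
      = hybrid_fill L j G Us (h, u, snd (user_source j D))"
    if "length G = L" "length Us = L" for G h D Us u
    using j that
    by (auto simp: hybrid_fill_def hybrid_keys_def input_strings_def user_source_def nth_list_update
        comp_def nth_take intro!: map_cong)
  have "hybrid L qX W Hf r N j =
    bind_pmf (hash_choice L Hf) (\<lambda>G. bind_pmf (pmf_of_set (Hf j)) (\<lambda>h.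
    bind_pmf (iid (joint_XZ L qX W) N) (\<lambda>D.
    bind_pmf (unif_strings L r) (\<lambda>Us. bind_pmf (unif_bits (r j)) (\<lambda>u.
      return_pmf (hybrid_fill L j G Us (h, u, snd (user_source j D))))))))"
    unfolding hybrid_resample[OF j]
    by (intro bind_pmf_cong refl)
      (simp add: fill length_of_set_pmf_hash_choice length_of_set_pmf_unif_strings)
  also have "\<dots> =
    bind_pmf (hash_choice L Hf) (\<lambda>G. bind_pmf (unif_strings L r) (\<lambda>Us.
    bind_pmf (iid (joint_XZ L qX W) N) (\<lambda>D.
    bind_pmf (pmf_of_set (Hf j)) (\<lambda>h. bind_pmf (unif_bits (r j)) (\<lambda>u.
      return_pmf (hybrid_fill L j G Us (h, u, snd (user_source j D))))))))"
    by (intro bind_pmf_cong refl bind_pmf_rotate3)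
  finally show ?thesis
    by (simp add: hash_ideal_def bind_map_pmf map_bind_pmf map_pmf_comp map_pmf_def bind_assoc_pmf
        bind_return_pmf)
qed

lemma map_pmf_user_source_iid:
  "map_pmf (user_source j) (iid (joint_XZ L qX W) N) = unzip_pmf (iid (XZX L qX W j) N)"
proof -
  have "XZX L qX W j = map_pmf (\<lambda>w. (fst w ! j, (snd w, take j (fst w)))) (joint_XZ L qX W)"
    unfolding XZX_def by (rule map_pmf_cong) (auto simp: case_prod_beta)
  then show ?thesis
    by (simp add: unzip_pmf_def iid_map_pmf map_pmf_comp user_source_def[abs_def] comp_def)
qed

lemma vdist_hybrid_Suc_le:
  fixes W :: "bool list \<Rightarrow> 'z::finite pmf"
  assumes j: "j < L" and N: "N \<ge> 1"
    and r: "real (r j) = real N * (cond_entropy_pmf (XZX L qX W j) - eps2 L N \<xi> / 2)"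
    and tu: "\<And>l. l < L \<Longrightarrow> two_universal N (r l) (Hf l)"
  shows "vdist (hybrid L qX W Hf r N (Suc j)) (hybrid L qX W Hf r N j)
           \<le> hash_error N \<xi>"
proof -
  define J where "J = map_pmf (user_source j) (iid (joint_XZ L qX W) N)"
  have fJ: "finite (set_pmf J)"
    by (simp add: J_def finite_set_pmf_iid finite_set_pmf_joint_XZ)
  have "vdist (hybrid L qX W Hf r N (Suc j)) (hybrid L qX W Hf r N j)
      \<le> vdist (hash_real J (Hf j)) (hash_ideal J (Hf j) (r j))"
    unfolding hybrid_Suc_eq[OF j] hybrid_eq[OF j] J_def[symmetric]
    using fJ tu[OF j] finite_set_pmf_hash_choice[OF tu]
    by (intro vdist_bind_pmf_kernels_le vdist_map_pmf_le)
      (auto simp: hash_real_def hash_ideal_def finite_set_pmf_unif_strings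
          finite_set_pmf_unif_bits two_universal_def)
  also have "\<dots> \<le> 2 * exp (- (real N * (delta_star_L L N * ln 2)\<^sup>2 / 4))
      + sqrt (2 ^ r j * 2 powr (- (real N * (cond_entropy_pmf (XZX L qX W j) - delta_star_L L N))))"
    unfolding J_def map_pmf_user_source_iid
    using j N tu[OF j] delta_star_L_pos[of L N]
    by (intro vdist_hash_iid_le) (auto simp: XZX_def finite_set_pmf_joint_XZ)
  also have "\<dots> \<le> hash_error N \<xi>"
    using exp_delta_star_L_le[OF N, of L] by (simp add: hash_rate_eq[OF r] hash_error_def)
  finally show ?thesis .
qed

definition apply_hashes :: "nat \<Rightarrow> (bool list \<Rightarrow> bool list) list \<Rightarrow> bool list list
    \<Rightarrow> bool list list" where
  "apply_hashes L G X = map (\<lambda>l. (G ! l) (X ! l)) [0..<L]"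

lemma hybrid_all_hashed:
  "hybrid L qX W Hf r N L = bind_pmf (hash_choice L Hf) (\<lambda>G. bind_pmf (iid_inputs L qX N) (\<lambda>X.
      map_pmf (\<lambda>Z. (G, Z, apply_hashes L G X)) (chanN W N X)))"
proof -
  have keys: "hybrid_keys L L G D Us = apply_hashes L G (input_strings L D)" for G D Us
    unfolding hybrid_keys_def apply_hashes_def by (intro map_cong) auto
  have "hybrid L qX W Hf r N L = bind_pmf (hash_choice L Hf) (\<lambda>G.
      map_pmf (\<lambda>(X, Z). (G, Z, apply_hashes L G X))
        (map_pmf (\<lambda>D. (input_strings L D, map snd D)) (iid (joint_XZ L qX W) N)))"
    unfolding hybrid_def keys map_pmf_const by (simp add: map_pmf_def[symmetric] map_pmf_comp)
  then show ?thesis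
    by (simp add: iid_inputs_chanN[symmetric] map_bind_pmf map_pmf_comp)
qed

lemma hybrid_none_hashed:
  "hybrid L qX W Hf r N 0 = bind_pmf (hash_choice L Hf) (\<lambda>G. bind_pmf (iid_inputs L qX N) (\<lambda>X.
      bind_pmf (chanN W N X) (\<lambda>Z. map_pmf (\<lambda>Us. (G, Z, Us)) (unif_strings L r))))"
proof -
  have "hybrid_keys L 0 G D Us = Us" if "Us \<in> set_pmf (unif_strings L r)" for G D Us
    using length_of_set_pmf_unif_strings[OF that]
    by (auto simp: hybrid_keys_def intro: nth_equalityI)
  then have "hybrid L qX W Hf r N 0 = bind_pmf (hash_choice L Hf) (\<lambda>G.
      bind_pmf (iid (joint_XZ L qX W) N) (\<lambda>D. map_pmf (\<lambda>Us. (G, map snd D, Us))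
          (unif_strings L r)))"
    unfolding hybrid_def by (intro bind_pmf_cong map_pmf_cong refl) simp
  also have "\<dots> = bind_pmf (hash_choice L Hf) (\<lambda>G.
      bind_pmf (map_pmf (\<lambda>D. (input_strings L D, map snd D)) (iid (joint_XZ L qX W) N))
        (\<lambda>w. map_pmf (\<lambda>Us. (G, snd w, Us)) (unif_strings L r)))"
    by (simp add: bind_map_pmf)
  finally show ?thesis
    by (simp add: iid_inputs_chanN[symmetric] bind_assoc_pmf bind_map_pmf)
qed

lemma vdist_hybrid_all_none_le:
  fixes W :: "bool list \<Rightarrow> 'z::finite pmf"
  assumes N: "N \<ge> 1"
    and r: "\<And>l. l < L \<Longrightarrow> real (r l) = real N * (cond_entropy_pmf (XZX L qX W l) - eps2 L N \<xi> / 2)"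
    and tu: "\<And>l. l < L \<Longrightarrow> two_universal N (r l) (Hf l)"
  shows "vdist (hybrid L qX W Hf r N L) (hybrid L qX W Hf r N 0)
           \<le> real L * hash_error N \<xi>"
proof (rule vdist_telescope_le)
  show "finite (set_pmf (hybrid L qX W Hf r N j))" for j
    using finite_set_pmf_hash_choice[OF tu]
    by (simp add: hybrid_def finite_set_pmf_iid finite_set_pmf_joint_XZ finite_set_pmf_unif_strings)
qed (rule vdist_hybrid_Suc_le[OF _ N r tu]; simp)

section \<open>One block of the scheme\<close>

lemma finite_set_pmf_first_block: "finite (set_pmf (first_block L e a))"
  unfolding first_block_def by (intro finite_set_pmf_seq_pmf) (auto simp: finite_set_pmf_unif_bits)

lemma vdist_first_block_le:
  assumes "\<And>l. l < L \<Longrightarrow> vdist (map_pmf (e l) (unif_bits (a l))) (iid (qX l) N) \<le> \<delta>"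
  shows "vdist (first_block L e a) (iid_inputs L qX N) \<le> real L * \<delta>"
proof -
  have "vdist (first_block L e a) (iid_inputs L qX N)
      \<le> (\<Sum>l<L. vdist (map_pmf (e l) (unif_bits (a l))) (iid (qX l) N))"
    unfolding first_block_def iid_inputs_def
    by (rule order_trans[OF vdist_seq_pmf_le])
      (auto simp: finite_set_pmf_unif_bits intro: finite_set_pmf_iid finite_set_pmf_finite_type)
  also have "\<dots> \<le> real L * \<delta>"
    using sum_mono[of "{..<L}" _ "\<lambda>_. \<delta>"] assms by simp
  finally show ?thesis .
qed

lemma unif_bits_add:
  "unif_bits (r + m) = bind_pmf (unif_bits r) (\<lambda>u. map_pmf (\<lambda>v. u @ v) (unif_bits m))"
proof (rule pmf_eqI)
  fix s :: "bool list"
  have inner: "pmf (map_pmf (\<lambda>v. u @ v) (unif_bits m)) s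
      = (if u = take r s \<and> length s = r + m then 1 / 2 ^ m else 0)"
    if u: "length u = r" for u
  proof (cases "u = take r s \<and> length s = r + m")
    case True
    then have "s = u @ drop r s"
      by (metis append_take_drop_id)
    moreover have "pmf (map_pmf (\<lambda>v. u @ v) (unif_bits m)) (u @ drop r s)
        = pmf (unif_bits m) (drop r s)"
      by (rule pmf_map_inj') (auto simp: inj_on_def)
    ultimately show ?thesis
      using True by (simp add: pmf_unif_bits)
  next
    case False
    then have "s \<notin> set_pmf (map_pmf (\<lambda>v. u @ v) (unif_bits m))"
      using u by (auto simp: set_pmf_unif_bits)
    then have "pmf (map_pmf (\<lambda>v. u @ v) (unif_bits m)) s = 0"
      by (rule pmf_eq_0_set_pmf[THEN iffD2])
    then show ?thesis
      by (simp only: if_not_P[OF False])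
  qed
  have "pmf (bind_pmf (unif_bits r) (\<lambda>u. map_pmf (\<lambda>v. u @ v) (unif_bits m))) s
      = (\<Sum>u\<in>bitstrings r. pmf (unif_bits r) u * pmf (map_pmf (\<lambda>v. u @ v) (unif_bits m)) s)"
    by (rule pmf_bind_eq_sum) (auto simp: finite_bitstrings set_pmf_unif_bits)
  also have "\<dots> = (\<Sum>u\<in>bitstrings r.
      if u = take r s then (if length s = r + m then 1 / 2 ^ r * (1 / 2 ^ m) else 0) else 0)"
    by (intro sum.cong refl) (auto simp: inner pmf_unif_bits)
  also have "\<dots> = pmf (unif_bits (r + m)) s"
    by (simp add: sum.delta finite_bitstrings pmf_unif_bits power_add)
  finally show "pmf (unif_bits (r + m)) s
      = pmf (bind_pmf (unif_bits r) (\<lambda>u. map_pmf (\<lambda>v. u @ v) (unif_bits m))) s"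
    by simp
qed

definition encode_all :: "nat \<Rightarrow> (nat \<Rightarrow> bool list \<Rightarrow> bool list) \<Rightarrow> bool list list
    \<Rightarrow> bool list list \<Rightarrow> bool list list" where
  "encode_all L e Ks Es = map (\<lambda>(l, u, v). e l (u @ v)) (zip [0..<L] (zip Ks Es))"

lemma next_block_eq:
  "next_block L e m G X = map_pmf (encode_all L e (apply_hashes L G X)) (unif_strings L m)"
proof -
  have "map2 (\<lambda>l E. e l (k l @ E)) ls Es = map (\<lambda>(l, u, v). e l (u @ v))
      (zip ls (zip (map k ls) Es))"
    for k :: "nat \<Rightarrow> bool list" and ls Es
    by (induction ls arbitrary: Es) (auto simp: zip_Cons1 split: list.split)
  then show ?thesis
    unfolding next_block_def unif_strings_def seq_pmf_map_pmf
    by (simp add: encode_all_def[abs_def] apply_hashes_def)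
qed

lemma first_block_eq:
  assumes "\<And>l. l < L \<Longrightarrow> a l = r l + m l"
  shows "first_block L e a
           = bind_pmf (unif_strings L r) (\<lambda>Ks. map_pmf (encode_all L e Ks) (unif_strings L m))"
proof -
  have "first_block L e a = seq_pmf (map (\<lambda>l. bind_pmf (unif_bits (r l)) (\<lambda>u.
      map_pmf (\<lambda>v. e l (u @ v)) (unif_bits (m l)))) [0..<L])"
    unfolding first_block_def using assms
    by (intro arg_cong[where f=seq_pmf] map_cong refl)
      (simp add: unif_bits_add map_bind_pmf map_pmf_comp)
  also have "\<dots> = bind_pmf (unif_strings L r) (\<lambda>Ks. map_pmf (encode_all L e Ks) (unif_strings L m))"
    unfolding unif_strings_def encode_all_def by (rule seq_pmf_bind_pmf)
  finally show ?thesis .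
qed

context
  fixes L N :: nat and \<xi> \<delta> :: real
    and qX :: "nat \<Rightarrow> bool pmf" and W :: "bool list \<Rightarrow> 'z::finite pmf"
    and Hf :: "nat \<Rightarrow> (bool list \<Rightarrow> bool list) set" and e :: "nat \<Rightarrow> bool list \<Rightarrow> bool list"
    and r a :: "nat \<Rightarrow> nat"
  assumes N: "N \<ge> 1"
    and r: "\<And>l. l < L \<Longrightarrow> real (r l) = real N * (cond_entropy_pmf (XZX L qX W l) - eps2 L N \<xi> / 2)"
    and tu: "\<And>l. l < L \<Longrightarrow> two_universal N (r l) (Hf l)"
    and enc: "\<And>l. l < L \<Longrightarrow> vdist (map_pmf (e l) (unif_bits (a l))) (iid (qX l) N) \<le> \<delta>"
begin

lemma vdist_first_block_hashes_le:
  "vdist (bind_pmf (hash_choice L Hf) (\<lambda>G. bind_pmf (first_block L e a) (\<lambda>X.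
            map_pmf (\<lambda>Z. (G, Z, apply_hashes L G X)) (chanN W N X))))
         (bind_pmf (hash_choice L Hf) (\<lambda>G. bind_pmf (first_block L e a) (\<lambda>X.
            bind_pmf (chanN W N X) (\<lambda>Z. map_pmf (\<lambda>Ks. (G, Z, Ks)) (unif_strings L r)))))
   \<le> block_error L N \<xi> \<delta>"
proof -
  define K1 where
    "K1 X = bind_pmf (hash_choice L Hf) (\<lambda>G. map_pmf (\<lambda>Z. (G, Z, apply_hashes L G X)) (chanN W N X))"
    for X
  define K2 where "K2 X = bind_pmf (hash_choice L Hf) (\<lambda>G.
      bind_pmf (chanN W N X) (\<lambda>Z. map_pmf (\<lambda>Ks. (G, Z, Ks)) (unif_strings L r)))" for X
  have "vdist (bind_pmf (first_block L e a) K1) (bind_pmf (first_block L e a) K2)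
      \<le> 2 * vdist (first_block L e a) (iid_inputs L qX N)
        + vdist (bind_pmf (iid_inputs L qX N) K1) (bind_pmf (iid_inputs L qX N) K2)"
    using finite_set_pmf_hash_choice[OF tu] finite_set_pmf_chanN[of W N]
    by (intro vdist_bind_pmf_change_prior_le)
      (simp_all add: finite_set_pmf_first_block finite_set_pmf_iid_inputs K1_def K2_def
          finite_set_pmf_unif_strings)
  also have "vdist (bind_pmf (iid_inputs L qX N) K1) (bind_pmf (iid_inputs L qX N) K2)
      = vdist (hybrid L qX W Hf r N L) (hybrid L qX W Hf r N 0)"
    unfolding hybrid_all_hashed hybrid_none_hashed K1_def K2_def
    by (subst (1 2) bind_commute_pmf) (rule refl)
  also have "\<dots> \<le> real L * hash_error N \<xi>"
    by (rule vdist_hybrid_all_none_le[OF N r tu])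
  also have "vdist (first_block L e a) (iid_inputs L qX N) \<le> real L * \<delta>"
    by (rule vdist_first_block_le[OF enc])
  finally show ?thesis
    unfolding K1_def K2_def block_error_def by (subst (1 2) bind_commute_pmf) simp
qed

end

section \<open>Chaining the blocks\<close>

definition block_outputs :: "nat \<Rightarrow> (nat \<Rightarrow> bool list \<Rightarrow> bool list) \<Rightarrow> (nat \<Rightarrow> nat)
    \<Rightarrow> (bool list \<Rightarrow> 'z pmf) \<Rightarrow> nat \<Rightarrow> (bool list \<Rightarrow> bool list) list \<Rightarrow> nat
    \<Rightarrow> bool list list \<Rightarrow> 'z list list pmf" where
  "block_outputs L e m W N G n X =
     bind_pmf (chanN W N X) (\<lambda>Z. map_pmf (\<lambda>Zs. Z # Zs) (run_blocks L e m W N G n X))"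

lemma block_outputs_Suc:
  "block_outputs L e m W N G (Suc n) X = bind_pmf (chanN W N X) (\<lambda>Z.
     bind_pmf (next_block L e m G X) (\<lambda>X'. map_pmf (\<lambda>Zs. Z # Zs) (block_outputs L e m W N G n X')))"
  by (simp add: block_outputs_def map_bind_pmf map_pmf_comp)

lemma finite_set_pmf_next_block: "finite (set_pmf (next_block L e m G X))"
  unfolding next_block_def by (intro finite_set_pmf_seq_pmf) (auto simp: finite_set_pmf_unif_bits)

lemma finite_set_pmf_block_outputs:
  "finite (set_pmf (block_outputs L e m (W :: bool list \<Rightarrow> 'z::finite pmf) N G n X))"
proof -
  have "finite (set_pmf (run_blocks L e m W N G n X))" for X
    by (induction n arbitrary: X) (auto simp: finite_set_pmf_next_block finite_set_pmf_chanN)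
  then show ?thesis
    by (simp add: block_outputs_def finite_set_pmf_chanN)
qed

lemma scheme_output_eq:
  "scheme_output L e a m W N Hf k = map_pmf concat
     (bind_pmf (hash_choice L Hf) (\<lambda>G.
        bind_pmf (first_block L e a) (block_outputs L e m W N G (k - 1))))"
  by (simp add: scheme_output_def hash_choice_def block_outputs_def[abs_def] map_bind_pmf map_pmf_comp)

lemma map_pmf_fst_XZX: "l < L \<Longrightarrow> map_pmf fst (XZX L qX W l) = qX l"
  by (simp add: XZX_def joint_XZ_def map_pmf_comp map_bind_pmf case_prod_beta map_pmf_nth_seq_pmf
      flip: map_pmf_def)

text \<open>Key and fresh bits fill exactly the encoder input because \<open>H(X) = H(X | Y) + I(X; Y)\<close>.\<close>

lemma rates_add:
  assumes l: "l < L"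
    and r: "real r = real N * (cond_entropy_pmf (XZX L qX W l) - eps2 L N \<xi> / 2)"
    and a: "real a = real N * (shannon_H (qX l) + eps2 L N \<xi> / 2)"
    and m: "real m = real N * (mutual_info_pmf (XZX L qX W l) + eps2 L N \<xi>)"
  shows "a = r + m"
proof -
  have H: "cond_entropy_pmf (XZX L qX W l) + mutual_info_pmf (XZX L qX W l) = shannon_H (qX l)"
    using map_pmf_fst_XZX[OF l, of qX W] by (simp add: cond_entropy_pmf_def mutual_info_pmf_def)
  have "real a = real r + real m"
    unfolding r a m H[symmetric] by (simp add: algebra_simps)
  then show ?thesis
    by linarith
qed

lemma vdist_block_output_iid_le:
  assumes "\<And>l. l < L \<Longrightarrow> vdist (map_pmf (e l) (unif_bits (a l))) (iid (qX l) N) \<le> \<delta>"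
  shows "vdist (bind_pmf (first_block L e a) (chanN W N))
           (iid (qZ L qX (W :: bool list \<Rightarrow> 'z::finite pmf)) N) \<le> real L * \<delta>"
proof -
  have "vdist (bind_pmf (first_block L e a) (chanN W N)) (bind_pmf (iid_inputs L qX N) (chanN W N))
      \<le> vdist (first_block L e a) (iid_inputs L qX N)"
    by (intro vdist_bind_pmf_le finite_set_pmf_first_block finite_set_pmf_iid_inputs
        finite_set_pmf_chanN)
  also have "\<dots> \<le> real L * \<delta>"
    by (rule vdist_first_block_le[OF assms])
  finally show ?thesis
    by (simp add: iid_inputs_chanN_output)
qed

context
  fixes L N :: nat and \<xi> \<delta> :: real
    and qX :: "nat \<Rightarrow> bool pmf" and W :: "bool list \<Rightarrow> 'z::finite pmf"
    and Hf :: "nat \<Rightarrow> (bool list \<Rightarrow> bool list) set" and e :: "nat \<Rightarrow> bool list \<Rightarrow> bool list"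
    and r a m :: "nat \<Rightarrow> nat"
  assumes N: "N \<ge> 1"
    and r: "\<And>l. l < L \<Longrightarrow> real (r l) = real N * (cond_entropy_pmf (XZX L qX W l) - eps2 L N \<xi> / 2)"
    and tu: "\<And>l. l < L \<Longrightarrow> two_universal N (r l) (Hf l)"
    and enc: "\<And>l. l < L \<Longrightarrow> vdist (map_pmf (e l) (unif_bits (a l))) (iid (qX l) N) \<le> \<delta>"
    and arm: "\<And>l. l < L \<Longrightarrow> a l = r l + m l"
begin

text \<open>The inputs of a block following a block with inputs \<open>X\<close> are nearly independent of the hash
  functions and the outputs of that block: they may be replaced by fresh first-block inputs.\<close>

lemma vdist_next_block_le:
  assumes fin: "\<And>G Z X. finite (set_pmf (\<Phi> G Z X))"
  shows "vdist (bind_pmf (hash_choice L Hf) (\<lambda>G. bind_pmf (first_block L e a) (\<lambda>X.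
                  bind_pmf (chanN W N X) (\<lambda>Z. bind_pmf (next_block L e m G X) (\<Phi> G Z)))))
               (bind_pmf (hash_choice L Hf) (\<lambda>G. bind_pmf (first_block L e a) (\<lambda>X.
                  bind_pmf (chanN W N X) (\<lambda>Z. bind_pmf (first_block L e a) (\<Phi> G Z)))))
         \<le> block_error L N \<xi> \<delta>"
proof -
  define \<Psi> where
    "\<Psi> = (\<lambda>(G, Z, Ks). bind_pmf (unif_strings L m) (\<lambda>Es. \<Phi> G Z (encode_all L e Ks Es)))"
  let ?B = "first_block L e a"
  have "vdist (bind_pmf (hash_choice L Hf) (\<lambda>G. bind_pmf ?B (\<lambda>X. bind_pmf (chanN W N X) (\<lambda>Z.
                 bind_pmf (next_block L e m G X) (\<Phi> G Z)))))
               (bind_pmf (hash_choice L Hf) (\<lambda>G. bind_pmf ?B (\<lambda>X. bind_pmf (chanN W N X) (\<lambda>Z.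
                 bind_pmf ?B (\<Phi> G Z)))))
      = vdist (bind_pmf (bind_pmf (hash_choice L Hf) (\<lambda>G. bind_pmf ?B (\<lambda>X.
                 map_pmf (\<lambda>Z. (G, Z, apply_hashes L G X)) (chanN W N X)))) \<Psi>)
              (bind_pmf (bind_pmf (hash_choice L Hf) (\<lambda>G. bind_pmf ?B (\<lambda>X.
                 bind_pmf (chanN W N X) (\<lambda>Z. map_pmf (\<lambda>Ks. (G, Z, Ks)) (unif_strings L r))))) \<Psi>)"
    by (simp add: next_block_eq first_block_eq[OF arm] \<Psi>_def bind_assoc_pmf bind_map_pmf)
  also have "\<dots> \<le> vdist (bind_pmf (hash_choice L Hf) (\<lambda>G. bind_pmf ?B (\<lambda>X.
                 map_pmf (\<lambda>Z. (G, Z, apply_hashes L G X)) (chanN W N X))))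
              (bind_pmf (hash_choice L Hf) (\<lambda>G. bind_pmf ?B (\<lambda>X.
                 bind_pmf (chanN W N X) (\<lambda>Z. map_pmf (\<lambda>Ks. (G, Z, Ks)) (unif_strings L r)))))"
    using finite_set_pmf_hash_choice[OF tu] fin
    by (intro vdist_bind_pmf_le)
      (auto simp: \<Psi>_def finite_set_pmf_first_block finite_set_pmf_chanN
          finite_set_pmf_unif_strings split: prod.split)
  also have "\<dots> \<le> block_error L N \<xi> \<delta>"
    by (rule vdist_first_block_hashes_le[OF N r tu enc])
  finally show ?thesis .
qed

lemma vdist_block_outputs_Suc_le:
  "vdist (bind_pmf (hash_choice L Hf) (\<lambda>G. bind_pmf (first_block L e a)
      (block_outputs L e m W N G (Suc n))))
         (bind_pmf (bind_pmf (first_block L e a) (chanN W N)) (\<lambda>Z. map_pmf (\<lambda>Zs. Z # Zs)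
            (bind_pmf (hash_choice L Hf) (\<lambda>G. bind_pmf (first_block L e a)
                (block_outputs L e m W N G n)))))
   \<le> block_error L N \<xi> \<delta>"
proof -
  let ?\<Phi> = "\<lambda>G Z X. map_pmf (\<lambda>Zs. Z # Zs) (block_outputs L e m W N G n X)"
  have "bind_pmf (hash_choice L Hf) (\<lambda>G. bind_pmf (first_block L e a)
      (\<lambda>X. bind_pmf (chanN W N X) (\<lambda>Z.
        bind_pmf (first_block L e a) (?\<Phi> G Z))))
    = bind_pmf (hash_choice L Hf) (\<lambda>G. bind_pmf (bind_pmf (first_block L e a) (chanN W N)) (\<lambda>Z.
        map_pmf (\<lambda>Zs. Z # Zs) (bind_pmf (first_block L e a) (block_outputs L e m W N G n))))"
    by (simp add: bind_assoc_pmf map_bind_pmf)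
  also have "\<dots> = bind_pmf (bind_pmf (first_block L e a) (chanN W N)) (\<lambda>Z. map_pmf (\<lambda>Zs. Z # Zs)
      (bind_pmf (hash_choice L Hf) (\<lambda>G. bind_pmf (first_block L e a)
          (block_outputs L e m W N G n))))"
    by (subst bind_commute_pmf) (simp add: map_bind_pmf)
  finally have fresh: "bind_pmf (bind_pmf (first_block L e a) (chanN W N))
      (\<lambda>Z. map_pmf (\<lambda>Zs. Z # Zs)
      (bind_pmf (hash_choice L Hf) (\<lambda>G. bind_pmf (first_block L e a)
          (block_outputs L e m W N G n))))
    = bind_pmf (hash_choice L Hf) (\<lambda>G. bind_pmf (first_block L e a) (\<lambda>X. bind_pmf (chanN W N X) (\<lambda>Z.
        bind_pmf (first_block L e a) (?\<Phi> G Z))))"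
    by (rule sym)
  show ?thesis
    unfolding block_outputs_Suc fresh
    by (rule vdist_next_block_le) (simp add: finite_set_pmf_block_outputs)
qed

lemma vdist_block_outputs_le:
  "vdist (bind_pmf (hash_choice L Hf) (\<lambda>G. bind_pmf (first_block L e a)
      (block_outputs L e m W N G n)))
         (seq_pmf (replicate (Suc n) (bind_pmf (first_block L e a) (chanN W N))))
   \<le> real n * block_error L N \<xi> \<delta>"
proof (induction n)
  case 0
  show ?case
    by (simp add: block_outputs_def map_pmf_def[symmetric] map_bind_pmf bind_assoc_pmf
        bind_return_pmf)
next
  case (Suc n)
  let ?B = "first_block L e a"
  let ?Q1 = "bind_pmf ?B (chanN W N)"
  let ?R = "\<lambda>n. bind_pmf (hash_choice L Hf) (\<lambda>G. bind_pmf ?B (block_outputs L e m W N G n))"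
  have fQ1: "finite (set_pmf ?Q1)" and fR: "\<And>n. finite (set_pmf (?R n))"
    and fQs: "\<And>k. finite (set_pmf (seq_pmf (replicate k ?Q1)))"
    using finite_set_pmf_hash_choice[OF tu]
    by (auto simp: finite_set_pmf_first_block finite_set_pmf_chanN finite_set_pmf_block_outputs
        intro!: finite_set_pmf_seq_pmf)
  have "vdist (?R (Suc n)) (seq_pmf (?Q1 # replicate (Suc n) ?Q1))
      \<le> vdist (?R (Suc n)) (bind_pmf ?Q1 (\<lambda>Z. map_pmf (\<lambda>Zs. Z # Zs) (?R n)))
        + vdist (bind_pmf ?Q1 (\<lambda>Z. map_pmf (\<lambda>Zs. Z # Zs) (?R n)))
            (seq_pmf (?Q1 # replicate (Suc n) ?Q1))"
    using fQ1 fR fQs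
    by (intro vdist_triangle) (simp_all del: set_bind_pmf add: set_bind_pmf[of ?Q1])
  also have "\<dots> \<le> block_error L N \<xi> \<delta> + vdist (?R n) (seq_pmf (replicate (Suc n) ?Q1))"
    using fQ1 fR fQs by (intro add_mono vdist_block_outputs_Suc_le vdist_bind_Cons_seq_pmf_le) auto
  finally show ?case
    using Suc by (simp add: distrib_right)
qed

lemma vdist_scheme_output_le:
  assumes k: "k \<ge> 1"
  shows "vdist (scheme_output L e a m W N Hf k) (iid (qZ L qX W) (k * N))
           \<le> real (k - 1) * block_error L N \<xi> \<delta> + real k * (real L * \<delta>)"
proof -
  let ?R = "bind_pmf (hash_choice L Hf) (\<lambda>G.
    bind_pmf (first_block L e a) (block_outputs L e m W N G (k - 1)))"
  let ?Q1 = "bind_pmf (first_block L e a) (chanN W N)"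
  let ?Z = "iid (qZ L qX W) N"
  have fin: "finite (set_pmf ?R)" "finite (set_pmf (seq_pmf (replicate k ?Q1)))"
    "finite (set_pmf (seq_pmf (replicate k ?Z)))"
    using finite_set_pmf_hash_choice[OF tu]
    by (auto simp: finite_set_pmf_first_block finite_set_pmf_chanN finite_set_pmf_block_outputs qZ_def
        finite_set_pmf_joint_XZ intro!: finite_set_pmf_seq_pmf finite_set_pmf_iid)
  have "vdist (scheme_output L e a m W N Hf k) (iid (qZ L qX W) (k * N))
      \<le> vdist (map_pmf concat ?R) (map_pmf concat (seq_pmf (replicate k ?Q1)))
        + vdist (map_pmf concat (seq_pmf (replicate k ?Q1)))
            (map_pmf concat (seq_pmf (replicate k ?Z)))"
    unfolding scheme_output_eq iid_mult using fin by (intro vdist_triangle) simp_all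
  also have "\<dots> \<le> vdist ?R (seq_pmf (replicate k ?Q1))
      + vdist (seq_pmf (replicate k ?Q1)) (seq_pmf (replicate k ?Z))"
    using fin by (intro add_mono vdist_map_pmf_le)
  also have "vdist ?R (seq_pmf (replicate k ?Q1))
      \<le> real (k - 1) * block_error L N \<xi> \<delta>"
    using vdist_block_outputs_le[of "k - 1"] k by simp
  also have "vdist (seq_pmf (replicate k ?Q1)) (seq_pmf (replicate k ?Z)) \<le> (\<Sum>i<k. vdist ?Q1 ?Z)"
    by (rule order_trans[OF vdist_seq_pmf_le])
      (auto simp: finite_set_pmf_first_block finite_set_pmf_chanN qZ_def finite_set_pmf_joint_XZ
        intro: finite_set_pmf_iid)
  also have "\<dots> \<le> real k * (real L * \<delta>)"
    using vdist_block_output_iid_le[where L=L and e=e and a=a and qX=qX and N=N and W=W, OF enc]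
    by (simp add: mult_left_mono)
  finally show ?thesis
    by simp
qed

end

theorem lemma14:
  fixes L N k :: nat and \<xi> \<delta> :: real
    and qX :: "nat \<Rightarrow> bool pmf"
    and W :: "bool list \<Rightarrow> 'z::finite pmf"
    and Hf :: "nat \<Rightarrow> (bool list \<Rightarrow> bool list) set"
    and e :: "nat \<Rightarrow> bool list \<Rightarrow> bool list"
    and r a m :: "nat \<Rightarrow> nat"
  assumes "L \<ge> 2" and "N \<ge> 1" and "k \<ge> 1" and "\<xi> > 0"
    and "\<forall>l<L. real (r l) = real N * (cond_entropy_pmf (XZX L qX W l) - eps2 L N \<xi> / 2)"
    and "\<forall>l<L. real (a l) = real N * (shannon_H (qX l) + eps2 L N \<xi> / 2)"
    and "\<forall>l<L. real (m l) = real N * (mutual_info_pmf (XZX L qX W l) + eps2 L N \<xi>)"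
    and "\<forall>l<L. two_universal N (r l) (Hf l)"
    and "\<forall>l<L. \<forall>E. length E = a l \<longrightarrow> length (e l E) = N"
    and "\<forall>l<L. vdist (map_pmf (e l) (unif_bits (a l))) (iid (qX l) N) \<le> \<delta>"
  shows "vdist (scheme_output L e a m W N Hf k) (iid (qZ L qX W) (k * N))
           \<le> real (k - 1) * delta2 L N \<xi> \<delta> k + real k * delta_star L N \<xi> \<delta> k"
proof -
  note L = assms(1) and N = assms(2) and k = assms(3)
  have r: "\<And>l. l < L \<Longrightarrow> real (r l) = real N * (cond_entropy_pmf (XZX L qX W l) - eps2 L N \<xi> / 2)"
    and tu: "\<And>l. l < L \<Longrightarrow> two_universal N (r l) (Hf l)"
    and enc: "\<And>l. l < L \<Longrightarrow> vdist (map_pmf (e l) (unif_bits (a l))) (iid (qX l) N) \<le> \<delta>"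
    using assms(5,8,10) by blast+
  have rates: "a l = r l + m l" if "l < L" for l
    using that assms(5-7) by (intro rates_add[OF that]) simp_all
  have \<delta>: "\<delta> \<ge> 0"
    using enc[of 0] L vdist_nonneg[of "map_pmf (e 0) (unif_bits (a 0))" "iid (qX 0) N"] by linarith
  have "vdist (scheme_output L e a m W N Hf k) (iid (qZ L qX W) (k * N))
      \<le> real (k - 1) * block_error L N \<xi> \<delta> + real k * (real L * \<delta>)"
    by (rule vdist_scheme_output_le[OF N r tu enc rates k])
  also have "\<dots> \<le> real (k - 1) * delta2 L N \<xi> \<delta> k + real k * delta_star L N \<xi> \<delta> k"
    by (rule error_terms_le[OF L k \<delta>])
  finally show ?thesis .
qed

end
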